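(* Let $n\ge 3$, let $\Omega \subset \mathbb{R}^n$ be an open subset with diameter $R$, fix $k \in \{1,\ldots, n-1\}$ and let $E \Subset \Omega$ be a compact subset satisfying $\mathscr{H}_\Psi(E) < \infty$, where \[ \Psi(t) = \begin{cases} Rt & \text{if } k=1, \\ t^2 |\log(R/t)| & \text{if } k=2, \\ t^2 & \text{if } k \ge 3. \end{cases} \] Fix $h \in [0,\infty)$ satisfying $hR < k$. Then there exists a constant $C_1= C_1(n,k,hR)$ with the following property: for each $Q \in (\mathscr{H}_\Psi(E), \infty)$ there exist a relatively compact open set $U$ containing $E$ and a function $w \in C^2(\overline\Omega)$ such that $w < 0$ on $\overline{\Omega}$ and \[ \mathscr{F}_k^-[w] \ge \mathbb{1}_{U} \ \text{ on } \Omega, \qquad \|w\|_\infty \le C_1 Q. \] In particular, \[ \mathscr{F}_k^-[w] + \frac{1}{C_1 Q} w \ge 0 \ \text{ on } U, \qquad \mathscr{F}_k^-[w] \ge 0 \ \text{ on } \Omega, \] and \[ \bar{\mu}(\mathscr{F}_k^-,E) \ge \frac{1}{C_1\mathscr{H}_\Psi(E)}. \]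
   Context: For a symmetric matrix $A$ with eigenvalues $\lambda_1(A)\le\dots\le\lambda_n(A)$, $\mathcal{P}_k^-(A)=\lambda_1(A)+\dots+\lambda_k(A)$, and $\mathscr{F}_k^-[w] = \mathcal{P}_k^-(\nabla^2 w) - h|\nabla w|$. $\mathbb{1}_U$ is the indicator function of $U$. For an open set $V\subset\mathbb{R}^n$, $\bar\mu(\mathscr{F}_k^-,V) = \sup\{c\in\mathbb{R} : \exists\, w \in \mathrm{USC}(\overline V),\ w<0 \text{ on } \overline V,\ \mathscr{F}_k^-[w]+cw\ge 0 \text{ in the viscosity sense on } V\}$, and for a set $E$, $\bar\mu(\mathscr{F}_k^-,E)=\sup\{\bar\mu(\mathscr{F}_k^-,V): V \text{ open}, E\subset V\}$. Generalized Hausdorff measure: $\mathscr{H}_\Psi(E) = \lim_{\delta\to 0^+}\inf\{\sum_j \Psi(r_j) : E\subset \bigcup_{j} B_{r_j}(x_j),\ r_j\le\delta\}$; the convention $1/0=+\infty$ is used. *)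

theory Defs
  imports "HOL-Analysis.Analysis" "HOL-Library.Multiset"
begin

definition eig_mset :: "real^'n^'n \<Rightarrow> real multiset" where
  "eig_mset A = (THE M. size M = CARD('n) \<and>
      (\<forall>t::real. det (mat t - A) = (\<Prod>l\<in>#M. t - l)))"

definition Pkminus :: "nat \<Rightarrow> real^'n^'n \<Rightarrow> real" where
  "Pkminus k A = sum_list (take k (sorted_list_of_multiset (eig_mset A)))"

(* F_k^-[w] at a point, given gradient p and Hessian X of w there *)
definition Fk :: "nat \<Rightarrow> real \<Rightarrow> real^'n^'n \<Rightarrow> real^'n \<Rightarrow> real" where
  "Fk k h X p = Pkminus k X - h * norm p"

definition C2_on :: "(real^'n) set \<Rightarrow> (real^'n \<Rightarrow> real) \<Rightarrow> (real^'n \<Rightarrow> real^'n)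
     \<Rightarrow> (real^'n \<Rightarrow> real^'n^'n) \<Rightarrow> bool" where
  "C2_on S w g H \<longleftrightarrow>
     (\<forall>x\<in>S. (w has_derivative (\<lambda>v. g x \<bullet> v)) (at x) \<and>
             (g has_derivative (\<lambda>v. H x *v v)) (at x)) \<and>
     continuous_on S H"

definition C2_closure :: "(real^'n) set \<Rightarrow> (real^'n \<Rightarrow> real) \<Rightarrow> (real^'n \<Rightarrow> real^'n)
     \<Rightarrow> (real^'n \<Rightarrow> real^'n^'n) \<Rightarrow> bool" where
  "C2_closure \<Omega> w g H \<longleftrightarrow> C2_on \<Omega> w g H \<and>
     continuous_on (closure \<Omega>) w \<and> continuous_on (closure \<Omega>) g \<and>
     continuous_on (closure \<Omega>) H"

definition usc_on :: "'a::metric_space set \<Rightarrow> ('a \<Rightarrow> real) \<Rightarrow> bool" where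
  "usc_on S w \<longleftrightarrow> (\<forall>x\<in>S. \<forall>a. w x < a \<longrightarrow>
      (\<exists>e>0. \<forall>y\<in>S. dist y x < e \<longrightarrow> w y < a))"

definition visc_sub :: "nat \<Rightarrow> real \<Rightarrow> real \<Rightarrow> (real^'n) set \<Rightarrow> (real^'n \<Rightarrow> real) \<Rightarrow> bool" where
  "visc_sub k h c V w \<longleftrightarrow>
     (\<forall>x\<in>V. \<forall>\<phi> g H r. r > 0 \<and> ball x r \<subseteq> V \<and> C2_on (ball x r) \<phi> g H \<and>
        (\<forall>y\<in>ball x r. w y \<le> \<phi> y) \<and> \<phi> x = w x
        \<longrightarrow> Fk k h (H x) (g x) + c * w x \<ge> 0)"

definition mu_open :: "nat \<Rightarrow> real \<Rightarrow> (real^'n) set \<Rightarrow> ereal" where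
  "mu_open k h V = Sup (ereal ` {c. \<exists>w. usc_on (closure V) w \<and>
        (\<forall>x\<in>closure V. w x < 0) \<and> visc_sub k h c V w})"

definition mu_set :: "nat \<Rightarrow> real \<Rightarrow> (real^'n) set \<Rightarrow> ereal" where
  "mu_set k h E = (SUP V\<in>{V. open V \<and> E \<subseteq> V}. mu_open k h V)"

(* generalized Hausdorff measure H_\<Psi>; the limit \<delta> \<rightarrow> 0+ of the (monotone in \<delta>)
   infimum is written as the supremum over \<delta> > 0 *)
definition gen_hausdorff :: "(real \<Rightarrow> real) \<Rightarrow> 'a::metric_space set \<Rightarrow> ennreal" where
  "gen_hausdorff \<Psi> E = (SUP \<delta>\<in>{0::real<..}.
      INF rc\<in>{(r, c). (\<forall>j::nat. 0 < r j \<and> r j \<le> \<delta>) \<and> E \<subseteq> (\<Union>j. ball (c j) (r j))}.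
        (\<Sum>j. ennreal (\<Psi> (fst rc j))))"

definition Psi :: "nat \<Rightarrow> real \<Rightarrow> real \<Rightarrow> real" where
  "Psi k R t = (if k = 1 then R * t else if k = 2 then t^2 * \<bar>ln (R / t)\<bar> else t^2)"

end

(* Cover E by finitely many small balls B(c, r) with sum Psi(r) < Q. On each ball take the radial
   function W(tau(x)), where tau = sqrt(r^2 + |x - c|^2), W'(t) = t phi(t) and phi(t) = r^k e^(h t) / t^k.
   Its Hessian is phi I + phi (h - k / tau) / tau (x - c)(x - c)^T, so on every orthonormal k-frame the
   partial trace minus h |grad| is at least phi k r^2 / (2 tau^2) as long as h tau <= k; on the ball
   itself this is at least 1 / (4 2^k), while W <= 2^(k+1) e^k Psi(r) everywhere. Hence
   w = 4 2^k sum W - C Q is negative, bounded by C Q, and satisfies F_k^-[w] >= 1_U, because P_k^- of a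
   symmetric matrix is the partial trace over a frame of eigenvectors. Frame lower bounds survive
   touching by C^2 test functions, so w is a viscosity subsolution of F_k^-[w] + w / (C Q) >= 0 on U,
   and letting Q decrease to H_Psi(E) gives the bound on the principal eigenvalue. *)

theory Submission
  imports Defs "HOL-Computational_Algebra.Polynomial"
begin

section \<open>Partial traces of symmetric matrices\<close>

definition orthonormal_frame :: "('n \<Rightarrow> real^'n) \<Rightarrow> 'n set \<Rightarrow> bool" where
  "orthonormal_frame u S \<longleftrightarrow> (\<forall>i\<in>S. \<forall>j\<in>S. u i \<bullet> u j = (if i = j then 1 else 0))"

definition frame_trace :: "real^'n^'n \<Rightarrow> ('n \<Rightarrow> real^'n) \<Rightarrow> 'n set \<Rightarrow> real" where
  "frame_trace A u S = (\<Sum>i\<in>S. u i \<bullet> (A *v u i))"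

lemma inner_matrix_vector_symmetric:
  fixes A :: "real^'n^'n"
  assumes "transpose A = A"
  shows "x \<bullet> (A *v y) = (A *v x) \<bullet> y"
  by (metis assms dot_lmul_matrix transpose_matrix_vector)

lemma mat_matrix_vector_mult: "(mat t :: real^'n^'n) *v v = t *\<^sub>R v"
  by (simp add: vec_eq_iff matrix_vector_mult_def mat_def if_distrib[of "\<lambda>x. x * _"] cong: if_cong)

lemma sum_matrix_vector_mult: "(\<Sum>j\<in>J. M j) *v v = (\<Sum>j\<in>J. (M j :: real^'n^'m) *v v)"
  by (induction J rule: infinite_finite_induct) (auto simp: matrix_vector_mult_add_rdistrib)

lemma linear_coeff_eq_0_if_quadratic_nonneg:
  fixes b c :: real
  assumes nonneg: "\<And>t. 0 \<le> b * t + c * t^2"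
  shows "b = 0"
proof (rule ccontr)
  assume "b \<noteq> 0"
  define d where "d = \<bar>c\<bar> + 1"
  have d: "d > 0" by (simp add: d_def add_nonneg_pos)
  have "0 \<le> b * (- b / d) + c * (- b / d)^2" by (rule nonneg)
  also have "\<dots> = b^2 / d * (c / d - 1)"
    using d by (simp add: field_simps power2_eq_square)
  also have "\<dots> < 0"
    using \<open>b \<noteq> 0\<close> by (intro mult_pos_neg) (auto simp: d_def divide_less_eq)
  finally show False by simp
qed

lemma eigenvector_if_rayleigh_minimal:
  fixes A :: "real^'n^'n"
  assumes symA: "transpose A = A" and S: "subspace S" and inv: "\<forall>x\<in>S. A *v x \<in> S"
    and vS: "v \<in> S" and v1: "v \<bullet> v = 1"
    and minimal: "\<forall>z\<in>S. (v \<bullet> (A *v v)) * (z \<bullet> z) \<le> z \<bullet> (A *v z)"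
  shows "A *v v = (v \<bullet> (A *v v)) *\<^sub>R v"
proof -
  define l where "l = v \<bullet> (A *v v)"
  define y where "y = A *v v - l *\<^sub>R v"
  have yS: "y \<in> S" using inv vS S by (simp add: y_def subspace_diff subspace_scale)
  have vy: "v \<bullet> y = 0" by (simp add: y_def l_def inner_diff_right v1)
  have yAv: "y \<bullet> (A *v v) = y \<bullet> y"
    by (simp add: y_def inner_diff_left inner_diff_right l_def v1 inner_commute)
  have vAy: "v \<bullet> (A *v y) = y \<bullet> y"
    using inner_matrix_vector_symmetric[OF symA, of v y] yAv by (simp add: inner_commute)
  have "0 \<le> 2 * (y \<bullet> y) * t + (y \<bullet> (A *v y) - l * (y \<bullet> y)) * t^2" for t
  proof -
    have "v + t *\<^sub>R y \<in> S" using vS yS S by (simp add: subspace_add subspace_scale)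
    then have "l * ((v + t *\<^sub>R y) \<bullet> (v + t *\<^sub>R y)) \<le> (v + t *\<^sub>R y) \<bullet> (A *v (v + t *\<^sub>R y))"
      using minimal l_def by blast
    then show ?thesis
      by (simp add: matrix_vector_right_distrib matrix_vector_mult_scaleR inner_add_left
          inner_add_right l_def[symmetric] v1 vy yAv vAy inner_commute[of y v] power2_eq_square algebra_simps)
  qed
  then have "2 * (y \<bullet> y) = 0" by (rule linear_coeff_eq_0_if_quadratic_nonneg)
  then show ?thesis by (simp add: y_def l_def)
qed

lemma symmetric_matrix_eigenvector_in_subspace:
  fixes A :: "real^'n^'n"
  assumes symA: "transpose A = A" and S: "subspace S" and inv: "\<forall>x\<in>S. A *v x \<in> S" and "S \<noteq> {0}"
  shows "\<exists>v\<in>S. v \<bullet> v = 1 \<and> A *v v = (v \<bullet> (A *v v)) *\<^sub>R v"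
proof -
  obtain x where xS: "x \<in> S" and x0: "x \<noteq> 0" using assms(4) S subspace_0 by blast
  define K where "K = S \<inter> sphere 0 1"
  have "compact K" unfolding K_def
    using closed_subspace[OF S] compact_sphere by (rule closed_Int_compact)
  moreover have "(1 / norm x) *\<^sub>R x \<in> K"
    using xS x0 S by (simp add: K_def subspace_scale)
  then have "K \<noteq> {}" by blast
  moreover have "continuous_on K (\<lambda>y. y \<bullet> (A *v y))" by (intro continuous_intros)
  ultimately obtain v where vK: "v \<in> K" and vmin: "\<forall>y\<in>K. v \<bullet> (A *v v) \<le> y \<bullet> (A *v y)"
    using continuous_attains_inf by blast
  have vS: "v \<in> S" and v1: "v \<bullet> v = 1" using vK by (auto simp: K_def dot_square_norm)
  have "(v \<bullet> (A *v v)) * (z \<bullet> z) \<le> z \<bullet> (A *v z)" if zS: "z \<in> S" for z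
  proof (cases "z = 0")
    case False
    have "(1 / norm z) *\<^sub>R z \<in> K" using zS False S by (simp add: K_def subspace_scale)
    then have "v \<bullet> (A *v v) \<le> (z \<bullet> (A *v z)) / (norm z)^2"
      using vmin by (force simp: matrix_vector_mult_scaleR power2_eq_square)
    then show ?thesis using False by (simp add: pos_le_divide_eq dot_square_norm)
  qed simp
  then show ?thesis
    using eigenvector_if_rayleigh_minimal[OF symA S inv vS v1] vS v1 by blast
qed

lemma symmetric_matrix_eigenbasis_of_subspace:
  fixes A :: "real^'n^'n"
  assumes symA: "transpose A = A"
  shows "subspace S \<Longrightarrow> (\<forall>x\<in>S. A *v x \<in> S) \<Longrightarrow> \<exists>B. finite B \<and> B \<subseteq> S \<and> span B = S \<and>
     pairwise orthogonal B \<and> (\<forall>b\<in>B. norm b = 1 \<and> A *v b = (b \<bullet> (A *v b)) *\<^sub>R b)"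
proof (induction "dim S" arbitrary: S rule: less_induct)
  case less
  show ?case
  proof (cases "S = {0}")
    case True
    then show ?thesis by (intro exI[of _ "{}"]) auto
  next
    case False
    then obtain v where vS: "v \<in> S" and v1: "v \<bullet> v = 1" and ev: "A *v v = (v \<bullet> (A *v v)) *\<^sub>R v"
      using symmetric_matrix_eigenvector_in_subspace[OF symA less.prems] by blast
    define S' where "S' = {y\<in>S. v \<bullet> y = 0}"
    have sS': "subspace S'" using less.prems(1)
      unfolding S'_def subspace_def by (auto simp: inner_add_right)
    have iS': "\<forall>y\<in>S'. A *v y \<in> S'"
    proof
      fix y assume y: "y \<in> S'"
      have "v \<bullet> (A *v y) = (A *v v) \<bullet> y" by (rule inner_matrix_vector_symmetric[OF symA])
      also have "\<dots> = (v \<bullet> (A *v v)) * (v \<bullet> y)" by (subst ev) simp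
      finally show "A *v y \<in> S'" using y less.prems(2) by (auto simp: S'_def)
    qed
    have "v \<notin> S'" using v1 by (simp add: S'_def)
    moreover have "S' \<subseteq> S" by (auto simp: S'_def)
    ultimately have "S' \<subset> S" using vS by blast
    then have "dim S' < dim S"
      using dim_psubset[of S' S] sS' less.prems(1) by (simp add: span_eq_iff[THEN iffD2])
    from less.hyps[OF this sS' iS'] obtain B' where B': "finite B'" "B' \<subseteq> S'" "span B' = S'"
      "pairwise orthogonal B'" "\<forall>b\<in>B'. norm b = 1 \<and> A *v b = (b \<bullet> (A *v b)) *\<^sub>R b" by blast
    have "S \<subseteq> span (insert v B')"
    proof
      fix y assume y: "y \<in> S"
      have "y - (v \<bullet> y) *\<^sub>R v \<in> S'"
        using y vS less.prems(1) v1 by (simp add: S'_def subspace_diff subspace_scale inner_diff_right)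
      then show "y \<in> span (insert v B')" using B'(3) span_breakdown_eq by blast
    qed
    moreover have "span (insert v B') \<subseteq> S"
      using B'(2) vS less.prems(1) by (intro span_minimal) (auto simp: S'_def)
    moreover have "pairwise orthogonal (insert v B')"
      using B' unfolding pairwise_insert by (auto simp: S'_def orthogonal_def inner_commute)
    moreover have "norm v = 1" using v1 by (simp add: norm_eq_sqrt_inner)
    ultimately show ?thesis
      using B' vS ev by (intro exI[of _ "insert v B'"]) (auto simp: S'_def)
  qed
qed

lemma symmetric_matrix_orthonormal_eigenbasis:
  fixes A :: "real^'n^'n"
  assumes symA: "transpose A = A"
  shows "\<exists>u. orthonormal_frame u UNIV \<and> (\<forall>i. A *v u i = (u i \<bullet> (A *v u i)) *\<^sub>R u i)"
proof -
  obtain B where B: "finite B" "span B = UNIV" "pairwise orthogonal B"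
      "\<forall>b\<in>B. norm b = 1 \<and> A *v b = (b \<bullet> (A *v b)) *\<^sub>R b"
    using symmetric_matrix_eigenbasis_of_subspace[OF symA, of UNIV] subspace_UNIV by auto
  have "independent B"
    using B(3,4) pairwise_orthogonal_independent by fastforce
  then have "card B = dim (UNIV :: (real^'n) set)"
    using B(2) by (metis dim_eq_card_independent dim_span)
  then have "card B = card (UNIV :: 'n set)" by simp
  then obtain u where u: "bij_betw u (UNIV :: 'n set) B"
    using finite_same_card_bij[OF _ B(1)] by (metis finite_class.finite_UNIV)
  then have uB: "u i \<in> B" and uinj: "u i = u j \<longleftrightarrow> i = j" for i j
    by (auto simp: bij_betw_def inj_on_def)
  have "orthonormal_frame u UNIV"
    using B(3,4) uB uinj by (auto simp: orthonormal_frame_def pairwise_def orthogonal_def dot_square_norm)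
  then show ?thesis using B(4) uB by blast
qed

lemma mset_eq_if_prod_linear_factors_eq:
  fixes M M' :: "real multiset"
  assumes "\<forall>t. (\<Prod>l\<in>#M. t - l) = (\<Prod>l\<in>#M'. t - l)"
  shows "M = M'"
proof -
  define p where "p = (\<lambda>N. \<Prod>l\<in>#N. [:- l, 1::real:])"
  have poly_p: "poly (p N) t = (\<Prod>l\<in>#N. t - l)" for N t
    by (simp add: p_def poly_prod_mset)
  have "p M = p M'" using assms by (simp add: poly_p fun_eq_iff flip: poly_eq_poly_eq_iff)
  then show ?thesis
  proof (induction M arbitrary: M')
    case empty
    show ?case
    proof (rule ccontr)
      assume "{#} \<noteq> M'"
      then obtain x where "x \<in># M'" by (metis multiset_nonemptyE)
      then have "poly (p M') x = 0" by (simp add: poly_p prod_mset_zero_iff)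
      then show False using empty by (simp add: p_def)
    qed
  next
    case (add x M)
    have "poly (p M') x = 0" using add.prems[symmetric] by (simp add: poly_p)
    then have "x \<in># M'" by (auto simp: poly_p prod_mset_zero_iff)
    then obtain M'' where M': "M' = add_mset x M''" by (metis multi_member_split)
    have "[:- x, 1:] * p M = [:- x, 1:] * p M''" using add.prems by (simp add: p_def M')
    then have "p M = p M''" by (simp only: mult_cancel_left) simp
    then have "M = M''" by (rule add.IH)
    then show ?case by (simp add: M')
  qed
qed

lemma conjugate_matrix_entry:
  fixes u :: "'n::finite \<Rightarrow> real^'n" and M :: "real^'n^'n"
  shows "(transpose (\<chi> r c. u c $ r) ** M ** (\<chi> r c. u c $ r)) $ i $ j = u i \<bullet> (M *v u j)"
proof -
  have "(transpose (\<chi> r c. u c $ r) ** M ** (\<chi> r c. u c $ r)) $ i $ j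
      = (\<Sum>l\<in>UNIV. (\<Sum>r\<in>UNIV. u i $ r * M $ r $ l) * u j $ l)"
    by (simp add: matrix_matrix_mult_def transpose_def)
  also have "\<dots> = (\<Sum>r\<in>UNIV. u i $ r * (\<Sum>l\<in>UNIV. M $ r $ l * u j $ l))"
    by (simp add: sum_distrib_left sum_distrib_right mult.assoc) (rule sum.swap)
  also have "\<dots> = u i \<bullet> (M *v u j)"
    by (simp add: inner_vec_def matrix_vector_mult_def)
  finally show ?thesis .
qed

lemma det_characteristic_orthonormal_eigenbasis:
  fixes A :: "real^'n^'n" and u :: "'n \<Rightarrow> real^'n"
  assumes orth: "orthonormal_frame u UNIV" and ev: "\<forall>i. A *v u i = l i *\<^sub>R u i"
  shows "det (mat t - A) = (\<Prod>i\<in>UNIV. t - l i)"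
proof -
  define P where "P = ((\<chi> r c. u c $ r) :: real^'n^'n)"
  have "(transpose P ** P) $ i $ j = u i \<bullet> u j" for i j
    using conjugate_matrix_entry[of u "mat 1" i j] by (simp add: P_def)
  then have "transpose P ** P = mat 1"
    using orth by (simp add: vec_eq_iff orthonormal_frame_def mat_def)
  then have det_P: "det P * det P = 1" by (metis det_I det_mul det_transpose)
  have "(transpose P ** (mat t - A) ** P) $ i $ j = (if i = j then t - l i else 0)" for i j
    using orth by (simp add: P_def conjugate_matrix_entry matrix_vector_mult_diff_rdistrib
        mat_matrix_vector_mult ev inner_diff_right orthonormal_frame_def)
  then have "det (transpose P ** (mat t - A) ** P) = (\<Prod>i\<in>UNIV. t - l i)"
    by (subst det_diagonal) simp_all
  then have "det P * det P * det (mat t - A) = (\<Prod>i\<in>UNIV. t - l i)"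
    by (simp add: det_mul algebra_simps)
  then show ?thesis using det_P by simp
qed

lemma eig_mset_orthonormal_eigenbasis:
  fixes A :: "real^'n^'n" and u :: "'n \<Rightarrow> real^'n"
  assumes orth: "orthonormal_frame u UNIV" and ev: "\<forall>i. A *v u i = l i *\<^sub>R u i"
  shows "eig_mset A = image_mset l (mset_set UNIV)"
  unfolding eig_mset_def
proof (rule the_equality)
  have prod: "(\<Prod>i\<in>UNIV. t - l i) = (\<Prod>l\<in>#image_mset l (mset_set UNIV). t - l)" for t
    by (simp add: prod_unfold_prod_mset image_mset.compositionality o_def)
  then show "size (image_mset l (mset_set UNIV)) = CARD('n) \<and>
      (\<forall>t. det (mat t - A) = (\<Prod>l\<in>#image_mset l (mset_set UNIV). t - l))"
    using det_characteristic_orthonormal_eigenbasis[OF orth ev] by simp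
  fix M assume "size M = CARD('n) \<and> (\<forall>t. det (mat t - A) = (\<Prod>l\<in>#M. t - l))"
  then show "M = image_mset l (mset_set UNIV)"
    using det_characteristic_orthonormal_eigenbasis[OF orth ev] prod
    by (intro mset_eq_if_prod_linear_factors_eq) simp
qed

lemma sum_take_sorted_image_mset:
  fixes f :: "'a \<Rightarrow> real"
  assumes "finite I" "k \<le> card I"
  shows "\<exists>S\<subseteq>I. card S = k \<and> sum_list (take k (sorted_list_of_multiset (image_mset f (mset_set I)))) = sum f S"
proof -
  obtain xs where xs: "set xs = I" "distinct xs" using finite_distinct_list[OF assms(1)] by blast
  define ys where "ys = sort_key f xs"
  have ys: "distinct ys" "set ys = I" "length ys = card I"
    using xs by (simp_all add: ys_def distinct_card[symmetric])
  have "image_mset f (mset_set I) = mset (map f ys)"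
    using xs by (simp add: ys_def mset_set_set[symmetric])
  then have "sorted_list_of_multiset (image_mset f (mset_set I)) = map f ys"
    by (simp only: sorted_list_of_multiset_mset) (simp add: ys_def sorted_sort_id)
  then have "sum_list (take k (sorted_list_of_multiset (image_mset f (mset_set I)))) = sum f (set (take k ys))"
    using ys by (simp add: take_map sum_list_distinct_conv_sum_set)
  moreover have "set (take k ys) \<subseteq> I" "card (set (take k ys)) = k"
    using ys assms(2) by (auto simp: distinct_card dest: in_set_takeD)
  ultimately show ?thesis by blast
qed

lemma Pkminus_eq_frame_trace:
  fixes A :: "real^'n^'n"
  assumes symA: "transpose A = A" and kn: "k \<le> CARD('n)"
  shows "\<exists>u S. orthonormal_frame u S \<and> card S = k \<and> Pkminus k A = frame_trace A u S"
proof -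
  obtain u where orth: "orthonormal_frame u UNIV" and ev: "\<forall>i. A *v u i = (u i \<bullet> (A *v u i)) *\<^sub>R u i"
    using symmetric_matrix_orthonormal_eigenbasis[OF symA] by blast
  obtain S where "card S = k" and
    "sum_list (take k (sorted_list_of_multiset (image_mset (\<lambda>i. u i \<bullet> (A *v u i)) (mset_set UNIV))))
       = (\<Sum>i\<in>S. u i \<bullet> (A *v u i))"
    using sum_take_sorted_image_mset[of UNIV k "\<lambda>i. u i \<bullet> (A *v u i)"] kn by auto
  moreover have "orthonormal_frame u S" using orth by (simp add: orthonormal_frame_def)
  ultimately show ?thesis
    using eig_mset_orthonormal_eigenbasis[OF orth ev]
    by (auto simp: Pkminus_def frame_trace_def)
qed

lemma frame_trace_add: "frame_trace (X + Y) u S = frame_trace X u S + frame_trace Y u S"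
  by (simp add: frame_trace_def matrix_vector_mult_add_rdistrib inner_add_right sum.distrib)

lemma frame_trace_scaleR: "frame_trace (a *\<^sub>R X) u S = a * frame_trace X u S"
  by (simp add: frame_trace_def scaleR_matrix_vector_assoc[symmetric] sum_distrib_left)

lemma sum_inner_frame_sq_le:
  assumes "orthonormal_frame u S" "finite S"
  shows "(\<Sum>i\<in>S. (z \<bullet> u i)^2) \<le> (norm z)^2"
proof -
  define p where "p = (\<Sum>i\<in>S. (z \<bullet> u i) *\<^sub>R u i)"
  have up: "u j \<bullet> p = z \<bullet> u j" if "j \<in> S" for j
  proof -
    have "u j \<bullet> p = (\<Sum>i\<in>S. if i = j then z \<bullet> u j else 0)"
      unfolding p_def inner_sum_right using assms(1) that
      by (intro sum.cong) (auto simp: orthonormal_frame_def)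
    then show ?thesis using assms(2) that by simp
  qed
  have "p \<bullet> p = (\<Sum>i\<in>S. (z \<bullet> u i) * (u i \<bullet> p))" by (simp add: p_def inner_sum_left)
  also have "\<dots> = (\<Sum>i\<in>S. (z \<bullet> u i)^2)" by (intro sum.cong) (simp_all add: up power2_eq_square)
  finally have "p \<bullet> p = (\<Sum>i\<in>S. (z \<bullet> u i)^2)" .
  moreover have "z \<bullet> p = (\<Sum>i\<in>S. (z \<bullet> u i)^2)"
    by (simp add: p_def inner_sum_right power2_eq_square)
  moreover have "0 \<le> (z - p) \<bullet> (z - p)" by simp
  ultimately show ?thesis
    by (simp add: inner_diff_left inner_diff_right inner_commute power2_norm_eq_inner)
qed

(* For symmetric X this implies L <= Fk k h X p (Fk_ge_if_Fk_frame_ge), and unlike Fk it is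
   monotone in X for the quadratic-form order, which is what comparison with test functions needs. *)
definition Fk_frame_ge :: "nat \<Rightarrow> real \<Rightarrow> real^'n^'n \<Rightarrow> real^'n \<Rightarrow> real \<Rightarrow> bool" where
  "Fk_frame_ge k h X p L \<longleftrightarrow>
     (\<forall>u S. orthonormal_frame u S \<and> card S = k \<longrightarrow> L \<le> frame_trace X u S - h * norm p)"

lemma Fk_ge_if_Fk_frame_ge:
  fixes X :: "real^'n^'n"
  assumes "transpose X = X" "k \<le> CARD('n)" "Fk_frame_ge k h X p L"
  shows "L \<le> Fk k h X p"
  using Pkminus_eq_frame_trace[OF assms(1,2)] assms(3) by (auto simp: Fk_frame_ge_def Fk_def)

lemma Fk_frame_ge_mono:
  fixes X Y :: "real^'n^'n"
  assumes "Fk_frame_ge k h X p L" "L' \<le> L" "\<forall>v. (X *v v) \<bullet> v \<le> (Y *v v) \<bullet> v"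
  shows "Fk_frame_ge k h Y p L'"
  unfolding Fk_frame_ge_def
proof (intro allI impI)
  fix u :: "'n \<Rightarrow> real^'n" and S assume frame: "orthonormal_frame u S \<and> card S = k"
  have "frame_trace X u S \<le> frame_trace Y u S"
    unfolding frame_trace_def using assms(3) by (intro sum_mono) (simp add: inner_commute)
  then show "L' \<le> frame_trace Y u S - h * norm p"
    using assms(1,2) frame unfolding Fk_frame_ge_def by force
qed

lemma Fk_frame_ge_scaleR:
  fixes X :: "real^'n^'n"
  assumes "0 \<le> a" "Fk_frame_ge k h X p L"
  shows "Fk_frame_ge k h (a *\<^sub>R X) (a *\<^sub>R p) (a * L)"
  unfolding Fk_frame_ge_def
proof (intro allI impI)
  fix u :: "'n \<Rightarrow> real^'n" and S assume "orthonormal_frame u S \<and> card S = k"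
  then have "a * L \<le> a * (frame_trace X u S - h * norm p)"
    using assms unfolding Fk_frame_ge_def by (simp add: mult_left_mono)
  then show "a * L \<le> frame_trace (a *\<^sub>R X) u S - h * norm (a *\<^sub>R p)"
    using assms(1) by (simp add: frame_trace_scaleR algebra_simps)
qed

lemma Fk_frame_ge_sum:
  fixes X :: "'a \<Rightarrow> real^'n^'n"
  assumes "0 \<le> h" "\<forall>j\<in>J. Fk_frame_ge k h (X j) (p j) (L j)"
  shows "Fk_frame_ge k h (\<Sum>j\<in>J. X j) (\<Sum>j\<in>J. p j) (\<Sum>j\<in>J. L j)"
  using assms(2)
proof (induction J rule: infinite_finite_induct)
  case (insert j J)
  have "h * norm (p j + sum p J) \<le> h * norm (p j) + h * norm (sum p J)"
    using assms(1) norm_triangle_ineq[of "p j" "sum p J"] by (simp add: mult_left_mono flip: distrib_left)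
  moreover have "L j \<le> frame_trace (X j) u S - h * norm (p j)"
    and "sum L J \<le> frame_trace (sum X J) u S - h * norm (sum p J)"
    if "orthonormal_frame u S \<and> card S = k" for u :: "'n \<Rightarrow> real^'n" and S
    using insert that unfolding Fk_frame_ge_def by auto
  ultimately show ?case
    using insert.hyps unfolding Fk_frame_ge_def by (fastforce simp: frame_trace_add)
qed (auto simp: Fk_frame_ge_def frame_trace_def)

section \<open>Second-order calculus and viscosity subsolutions\<close>

lemma bounded_linear_matrix_vector_mult_left: "bounded_linear (\<lambda>M::real^'n^'m. M *v b)"
  by (auto intro!: linearI simp: linear_conv_bounded_linear[symmetric] matrix_vector_mult_add_rdistrib
      scaleR_matrix_vector_assoc)

lemmas isCont_matrix_vector_mult_left [continuous_intros] =
  bounded_linear.isCont[OF bounded_linear_matrix_vector_mult_left]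

lemma has_real_derivative_along_line:
  fixes f :: "'a::real_normed_vector \<Rightarrow> real"
  assumes "(f has_derivative f') (at (p + s *\<^sub>R a))"
  shows "((\<lambda>\<sigma>. f (p + \<sigma> *\<^sub>R a)) has_real_derivative f' a) (at s)"
proof -
  have "((\<lambda>\<sigma>. p + \<sigma> *\<^sub>R a) has_derivative (\<lambda>\<sigma>. \<sigma> *\<^sub>R a)) (at s)"
    by (intro derivative_eq_intros) auto
  from has_derivative_compose[OF this assms]
  have "((\<lambda>\<sigma>. f (p + \<sigma> *\<^sub>R a)) has_derivative (\<lambda>\<sigma>. f' (\<sigma> *\<^sub>R a))) (at s)" .
  moreover have "f' (\<sigma> *\<^sub>R a) = f' a * \<sigma>" for \<sigma>
    using linear_scale[OF bounded_linear.linear[OF has_derivative_bounded_linear[OF assms]]] by simp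
  ultimately show ?thesis by (simp add: has_field_derivative_def)
qed

lemma has_real_derivative_gradient_along_line:
  fixes g :: "real^'n \<Rightarrow> real^'n"
  assumes "(g has_derivative (\<lambda>v. M *v v)) (at (p + s *\<^sub>R b))"
  shows "((\<lambda>\<sigma>. g (p + \<sigma> *\<^sub>R b) \<bullet> a) has_real_derivative (M *v b) \<bullet> a) (at s)"
proof -
  have "((\<lambda>y. g y \<bullet> a) has_derivative (\<lambda>v. (M *v v) \<bullet> a)) (at (p + s *\<^sub>R b))"
    using assms by (intro derivative_eq_intros) auto
  then show ?thesis by (rule has_real_derivative_along_line)
qed

lemma second_difference_eq_hessian:
  fixes \<phi> :: "real^'n \<Rightarrow> real"
  assumes C2: "C2_on (ball x r) \<phi> g H" and t: "0 < t" "t * (norm a + norm b) < r"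
  shows "\<exists>y. norm (y - x) \<le> t * (norm a + norm b) \<and>
    \<phi> (x + t *\<^sub>R a + t *\<^sub>R b) - \<phi> (x + t *\<^sub>R a) - \<phi> (x + t *\<^sub>R b) + \<phi> x = t * t * ((H y *v b) \<bullet> a)"
proof -
  have near: "norm (\<sigma> *\<^sub>R a + \<tau> *\<^sub>R b) \<le> t * (norm a + norm b)"
    if "0 \<le> \<sigma>" "\<sigma> \<le> t" "0 \<le> \<tau>" "\<tau> \<le> t" for \<sigma> \<tau>
  proof -
    have "norm (\<sigma> *\<^sub>R a + \<tau> *\<^sub>R b) \<le> \<sigma> * norm a + \<tau> * norm b"
      using norm_triangle_ineq[of "\<sigma> *\<^sub>R a" "\<tau> *\<^sub>R b"] that by simp
    also have "\<dots> \<le> t * (norm a + norm b)"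
      using that by (simp add: distrib_left add_mono mult_right_mono)
    finally show ?thesis .
  qed
  have inside: "x + \<sigma> *\<^sub>R a + \<tau> *\<^sub>R b \<in> ball x r"
    if "0 \<le> \<sigma>" "\<sigma> \<le> t" "0 \<le> \<tau>" "\<tau> \<le> t" for \<sigma> \<tau>
    using near[OF that] t dist_add_cancel[of x 0 "\<sigma> *\<^sub>R a + \<tau> *\<^sub>R b"] by (simp add: add.assoc)
  have d1: "(\<phi> has_derivative (\<lambda>v. g y \<bullet> v)) (at y)"
    and d2: "(g has_derivative (\<lambda>v. H y *v v)) (at y)" if "y \<in> ball x r" for y
    using C2 that by (auto simp: C2_on_def)
  define p where "p = (\<lambda>\<sigma>. \<phi> ((x + t *\<^sub>R b) + \<sigma> *\<^sub>R a) - \<phi> (x + \<sigma> *\<^sub>R a))"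
  have "DERIV p \<sigma> :> g ((x + t *\<^sub>R b) + \<sigma> *\<^sub>R a) \<bullet> a - g (x + \<sigma> *\<^sub>R a) \<bullet> a"
    if "0 \<le> \<sigma>" "\<sigma> \<le> t" for \<sigma>
    unfolding p_def using inside[of \<sigma> t] inside[of \<sigma> 0] that t
    by (intro DERIV_diff has_real_derivative_along_line d1) (auto simp: add_ac)
  from MVT2[OF t(1) this] obtain \<xi> where \<xi>: "0 < \<xi>" "\<xi> < t"
    "p t - p 0 = t * (g ((x + t *\<^sub>R b) + \<xi> *\<^sub>R a) \<bullet> a - g (x + \<xi> *\<^sub>R a) \<bullet> a)"
    by auto
  define q where "q = (\<lambda>\<tau>. g ((x + \<xi> *\<^sub>R a) + \<tau> *\<^sub>R b) \<bullet> a)"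
  have "DERIV q \<tau> :> (H ((x + \<xi> *\<^sub>R a) + \<tau> *\<^sub>R b) *v b) \<bullet> a"
    if "0 \<le> \<tau>" "\<tau> \<le> t" for \<tau>
    unfolding q_def using inside[of \<xi> \<tau>] that \<xi>
    by (intro has_real_derivative_gradient_along_line d2) auto
  from MVT2[OF t(1) this] obtain \<eta> where \<eta>: "0 < \<eta>" "\<eta> < t"
    "q t - q 0 = t * ((H ((x + \<xi> *\<^sub>R a) + \<eta> *\<^sub>R b) *v b) \<bullet> a)"
    by auto
  have "q t - q 0 = g ((x + t *\<^sub>R b) + \<xi> *\<^sub>R a) \<bullet> a - g (x + \<xi> *\<^sub>R a) \<bullet> a"
    by (simp add: q_def add_ac)
  moreover have "p t - p 0 = \<phi> (x + t *\<^sub>R a + t *\<^sub>R b) - \<phi> (x + t *\<^sub>R a) - \<phi> (x + t *\<^sub>R b) + \<phi> x"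
    by (simp add: p_def add_ac)
  ultimately have "\<phi> (x + t *\<^sub>R a + t *\<^sub>R b) - \<phi> (x + t *\<^sub>R a) - \<phi> (x + t *\<^sub>R b) + \<phi> x
      = t * t * ((H (x + \<xi> *\<^sub>R a + \<eta> *\<^sub>R b) *v b) \<bullet> a)"
    using \<xi>(3) \<eta>(3) by (metis mult.assoc)
  moreover have "norm ((x + \<xi> *\<^sub>R a + \<eta> *\<^sub>R b) - x) \<le> t * (norm a + norm b)"
    using near[of \<xi> \<eta>] \<xi> \<eta> by simp
  ultimately show ?thesis by blast
qed

lemma C2_on_hessian_symmetric:
  fixes \<phi> :: "real^'n \<Rightarrow> real"
  assumes "open X" "x \<in> X" "C2_on X \<phi> g H"
  shows "(H x *v b) \<bullet> a = (H x *v a) \<bullet> b"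
proof (rule ccontr)
  define e where "e = \<bar>(H x *v b) \<bullet> a - (H x *v a) \<bullet> b\<bar>"
  assume "(H x *v b) \<bullet> a \<noteq> (H x *v a) \<bullet> b"
  then have e: "e > 0" by (simp add: e_def)
  have "isCont H x"
    using assms continuous_on_eq_continuous_at[of X H] by (simp add: C2_on_def)
  then have cont_ba: "isCont (\<lambda>y. (H y *v b) \<bullet> a) x" and cont_ab: "isCont (\<lambda>y. (H y *v a) \<bullet> b) x"
    by (intro continuous_inner isCont_matrix_vector_mult_left continuous_const, assumption)+
  obtain d1 where d1: "d1 > 0" "\<forall>y. dist y x < d1 \<longrightarrow> dist ((H y *v b) \<bullet> a) ((H x *v b) \<bullet> a) < e / 2"
    using cont_ba e unfolding continuous_at_eps_delta by (meson half_gt_zero)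
  obtain d2 where d2: "d2 > 0" "\<forall>y. dist y x < d2 \<longrightarrow> dist ((H y *v a) \<bullet> b) ((H x *v a) \<bullet> b) < e / 2"
    using cont_ab e unfolding continuous_at_eps_delta by (meson half_gt_zero)
  define d where "d = min d1 d2"
  obtain r where r: "r > 0" "ball x r \<subseteq> X" using assms open_contains_ball by blast
  have C2: "C2_on (ball x r) \<phi> g H" using assms(3) r(2) by (auto simp: C2_on_def intro: continuous_on_subset)
  define t where "t = min r d / (2 * (norm a + norm b + 1))"
  have t: "t > 0" using r d1 d2 by (simp add: t_def d_def add_nonneg_pos)
  have "t * (norm a + norm b) \<le> t * (norm a + norm b + 1)" using t by simp
  also have "\<dots> = min r d / 2"
    unfolding t_def using add_nonneg_pos[of "norm a + norm b" 1] by (simp add: field_simps)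
  finally have tr: "t * (norm a + norm b) < r" "t * (norm a + norm b) < d"
    using r d1 d2 by (simp_all add: d_def)
  obtain y where y: "norm (y - x) \<le> t * (norm a + norm b)"
    "\<phi> (x + t *\<^sub>R a + t *\<^sub>R b) - \<phi> (x + t *\<^sub>R a) - \<phi> (x + t *\<^sub>R b) + \<phi> x = t * t * ((H y *v b) \<bullet> a)"
    using second_difference_eq_hessian[OF C2 t tr(1)] by blast
  have tr': "t * (norm b + norm a) < r" using tr(1) by (simp add: add.commute)
  obtain y' where y': "norm (y' - x) \<le> t * (norm b + norm a)"
    "\<phi> (x + t *\<^sub>R b + t *\<^sub>R a) - \<phi> (x + t *\<^sub>R b) - \<phi> (x + t *\<^sub>R a) + \<phi> x = t * t * ((H y' *v a) \<bullet> b)"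
    using second_difference_eq_hessian[OF C2 t tr'] by blast
  have "x + t *\<^sub>R b + t *\<^sub>R a = x + t *\<^sub>R a + t *\<^sub>R b" by (simp add: add_ac)
  then have "t * t * ((H y *v b) \<bullet> a) = t * t * ((H y' *v a) \<bullet> b)"
    using y(2) y'(2) by (simp only:)
  then have "(H y *v b) \<bullet> a = (H y' *v a) \<bullet> b" using t by simp
  moreover have "dist y x < d1" "dist y' x < d2"
    using y(1) y'(1) tr(2) by (simp_all add: dist_norm d_def add.commute)
  then have "\<bar>(H y *v b) \<bullet> a - (H x *v b) \<bullet> a\<bar> < e / 2" "\<bar>(H y' *v a) \<bullet> b - (H x *v a) \<bullet> b\<bar> < e / 2"
    using d1(2) d2(2) by (simp_all add: dist_real_def)
  ultimately show False unfolding e_def by (auto simp: abs_if split: if_splits)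
qed

lemma C2_on_hessian_transpose:
  fixes \<phi> :: "real^'n \<Rightarrow> real"
  assumes "open X" "x \<in> X" "C2_on X \<phi> g H"
  shows "transpose (H x) = H x"
proof -
  have "H x $ i $ j = H x $ j $ i" for i j
    using C2_on_hessian_symmetric[OF assms, of "axis j 1" "axis i 1"]
    by (simp add: matrix_vector_mult_basis inner_axis column_def)
  then show ?thesis by (simp add: vec_eq_iff transpose_def)
qed

lemma gradient_eq_0_at_min:
  fixes \<psi> :: "real^'n \<Rightarrow> real"
  assumes "open X" "x \<in> X" "(\<psi> has_derivative (\<lambda>v. G \<bullet> v)) (at x)" "\<forall>y\<in>X. \<psi> x \<le> \<psi> y"
  shows "G = 0"
proof -
  have "eventually (\<lambda>y. \<psi> x \<le> \<psi> y) (at x)"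
    using assms(1,2,4) unfolding eventually_at_topological by blast
  from has_derivative_local_min[OF assms(3) this] have "G \<bullet> G = 0" by metis
  then show ?thesis by simp
qed

lemma second_derivative_nonneg_at_min:
  fixes f f' f'' :: "real \<Rightarrow> real"
  assumes e: "0 < e"
    and f': "\<And>s. 0 \<le> s \<Longrightarrow> s \<le> e \<Longrightarrow> (f has_real_derivative f' s) (at s)"
    and f'': "\<And>s. 0 \<le> s \<Longrightarrow> s \<le> e \<Longrightarrow> (f' has_real_derivative f'' s) (at s)"
    and "f' 0 = 0" and "isCont f'' 0" and min: "\<And>s. 0 \<le> s \<Longrightarrow> s \<le> e \<Longrightarrow> f 0 \<le> f s"
  shows "0 \<le> f'' 0"
proof (rule ccontr)
  assume "\<not> 0 \<le> f'' 0"
  then obtain d where d: "0 < d" "\<forall>s. dist s 0 < d \<longrightarrow> dist (f'' s) (f'' 0) < - f'' 0"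
    using \<open>isCont f'' 0\<close> unfolding continuous_at_eps_delta by (meson neg_0_less_iff_less not_le)
  define t where "t = min e (d / 2)"
  have t: "0 < t" "t \<le> e" using e d by (auto simp: t_def)
  have f''_neg: "f'' s < 0" if "0 \<le> s" "s \<le> t" for s
    using d(2)[rule_format, of s] that d(1) by (auto simp: dist_real_def t_def abs_if split: if_splits)
  have f'_neg: "f' s < 0" if s: "0 < s" "s \<le> t" for s
  proof -
    obtain z where "0 < z" "z < s" "f' s - f' 0 = (s - 0) * f'' z"
      using MVT2[OF s(1), of f' f''] f'' s t by force
    then show ?thesis using f''_neg[of z] s \<open>f' 0 = 0\<close> by (simp add: mult_pos_neg)
  qed
  obtain z where "0 < z" "z < t" "f t - f 0 = (t - 0) * f' z"
    using MVT2[OF t(1), of f f'] f' t by force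
  moreover have "f' z < 0" using f'_neg \<open>0 < z\<close> \<open>z < t\<close> by simp
  ultimately have "f t < f 0" using t(1) mult_pos_neg[of t "f' z"] by simp
  then show False using min[of t] t by simp
qed

lemma hessian_nonneg_at_min:
  fixes \<psi> :: "real^'n \<Rightarrow> real"
  assumes X: "open X" "x \<in> X" and C2: "C2_on X \<psi> G H" and min: "\<forall>y\<in>X. \<psi> x \<le> \<psi> y"
  shows "0 \<le> (H x *v u) \<bullet> u"
proof -
  obtain r where r: "r > 0" "ball x r \<subseteq> X" using X open_contains_ball by blast
  define e where "e = r / (2 * (norm u + 1))"
  have e: "0 < e" using r by (simp add: e_def add_nonneg_pos)
  have line: "x + s *\<^sub>R u \<in> X" if "0 \<le> s" "s \<le> e" for s
  proof -
    have "s * norm u \<le> e * (norm u + 1)" using that by (intro mult_mono) auto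
    also have "\<dots> = r / 2" unfolding e_def using add_nonneg_pos[of "norm u" 1] by (simp add: field_simps)
    also have "\<dots> < r" using r by simp
    finally show ?thesis using r(2) that dist_add_cancel[of x 0 "s *\<^sub>R u"] by auto
  qed
  have "continuous_on X H" using C2 by (simp add: C2_on_def)
  then have "isCont H x" using X by (simp add: continuous_on_eq_continuous_at)
  moreover have "isCont (\<lambda>s. x + s *\<^sub>R u) 0" by (intro continuous_intros)
  ultimately have "isCont (\<lambda>s. H (x + s *\<^sub>R u)) 0" using isCont_o2[where f = "\<lambda>s. x + s *\<^sub>R u" and a = 0 and g = H] by simp
  then have cont: "isCont (\<lambda>s. (H (x + s *\<^sub>R u) *v u) \<bullet> u) 0"
    by (rule continuous_inner[OF isCont_matrix_vector_mult_left continuous_const])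
  have "(\<psi> has_derivative (\<lambda>v. G x \<bullet> v)) (at x)" using C2 X(2) by (simp add: C2_on_def)
  then have "G x = 0" using gradient_eq_0_at_min[OF X _ min] by blast
  then have grad0: "G (x + 0 *\<^sub>R u) \<bullet> u = 0" by simp
  have d1: "((\<lambda>s. \<psi> (x + s *\<^sub>R u)) has_real_derivative G (x + s *\<^sub>R u) \<bullet> u) (at s)"
    if "0 \<le> s" "s \<le> e" for s
    using C2 line[OF that] has_real_derivative_along_line[of \<psi> "\<lambda>v. G (x + s *\<^sub>R u) \<bullet> v" x s u]
    by (simp add: C2_on_def)
  have d2: "((\<lambda>s. G (x + s *\<^sub>R u) \<bullet> u) has_real_derivative (H (x + s *\<^sub>R u) *v u) \<bullet> u) (at s)"
    if "0 \<le> s" "s \<le> e" for s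
    using C2 line[OF that] has_real_derivative_gradient_along_line[of G "H (x + s *\<^sub>R u)" x s u u]
    by (simp add: C2_on_def)
  have min_line: "\<psi> (x + 0 *\<^sub>R u) \<le> \<psi> (x + s *\<^sub>R u)" if "0 \<le> s" "s \<le> e" for s
    using min line[OF that] by simp
  have "0 \<le> (H (x + 0 *\<^sub>R u) *v u) \<bullet> u"
    by (rule second_derivative_nonneg_at_min[OF e d1 d2 grad0 cont min_line])
  then show ?thesis by simp
qed

lemma C2_on_subset: "C2_on X w g H \<Longrightarrow> Y \<subseteq> X \<Longrightarrow> C2_on Y w g H"
  unfolding C2_on_def by (auto intro: continuous_on_subset)

lemma C2_on_diff:
  assumes "C2_on S f g H" "C2_on S f' g' H'"
  shows "C2_on S (\<lambda>x. f x - f' x) (\<lambda>x. g x - g' x) (\<lambda>x. H x - H' x)"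
  unfolding C2_on_def
proof (intro conjI ballI)
  fix x assume "x \<in> S"
  then have "((\<lambda>x. f x - f' x) has_derivative (\<lambda>v. g x \<bullet> v - g' x \<bullet> v)) (at x)"
    and "((\<lambda>x. g x - g' x) has_derivative (\<lambda>v. H x *v v - H' x *v v)) (at x)"
    using assms unfolding C2_on_def by (auto intro: has_derivative_diff)
  then show "((\<lambda>x. f x - f' x) has_derivative (\<lambda>v. (g x - g' x) \<bullet> v)) (at x)"
    and "((\<lambda>x. g x - g' x) has_derivative (\<lambda>v. (H x - H' x) *v v)) (at x)"
    by (simp_all add: inner_diff_left matrix_vector_mult_diff_rdistrib)
next
  show "continuous_on S (\<lambda>x. H x - H' x)"
    using assms unfolding C2_on_def by (intro continuous_on_diff) auto
qed

lemma C2_on_sum: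
  assumes "\<forall>j\<in>J. C2_on S (f j) (g j) (H j)"
  shows "C2_on S (\<lambda>x. \<Sum>j\<in>J. f j x) (\<lambda>x. \<Sum>j\<in>J. g j x) (\<lambda>x. \<Sum>j\<in>J. H j x)"
  unfolding C2_on_def
proof (intro conjI ballI)
  fix x assume "x \<in> S"
  then have "((\<lambda>x. \<Sum>j\<in>J. f j x) has_derivative (\<lambda>v. \<Sum>j\<in>J. g j x \<bullet> v)) (at x)"
    and "((\<lambda>x. \<Sum>j\<in>J. g j x) has_derivative (\<lambda>v. \<Sum>j\<in>J. H j x *v v)) (at x)"
    using assms unfolding C2_on_def by (auto intro!: has_derivative_sum)
  then show "((\<lambda>x. \<Sum>j\<in>J. f j x) has_derivative (\<lambda>v. (\<Sum>j\<in>J. g j x) \<bullet> v)) (at x)"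
    and "((\<lambda>x. \<Sum>j\<in>J. g j x) has_derivative (\<lambda>v. (\<Sum>j\<in>J. H j x) *v v)) (at x)"
    by (simp_all add: inner_sum_left sum_matrix_vector_mult)
next
  show "continuous_on S (\<lambda>x. \<Sum>j\<in>J. H j x)"
    using assms unfolding C2_on_def by (intro continuous_on_sum) auto
qed

lemma C2_on_affine:
  assumes "C2_on S f g H"
  shows "C2_on S (\<lambda>x. a * f x - b) (\<lambda>x. a *\<^sub>R g x) (\<lambda>x. a *\<^sub>R H x)"
  unfolding C2_on_def
proof (intro conjI ballI)
  fix x assume "x \<in> S"
  then have "((\<lambda>x. a * f x) has_derivative (\<lambda>v. a * (g x \<bullet> v))) (at x)"
    and "((\<lambda>x. a *\<^sub>R g x) has_derivative (\<lambda>v. a *\<^sub>R (H x *v v))) (at x)"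
    using assms unfolding C2_on_def
    by (auto intro!: has_derivative_mult_right has_derivative_scaleR_right)
  note this(1)[THEN has_derivative_diff, OF has_derivative_const[of b]] this(2)
  then show "((\<lambda>x. a * f x - b) has_derivative (\<lambda>v. a *\<^sub>R g x \<bullet> v)) (at x)"
    and "((\<lambda>x. a *\<^sub>R g x) has_derivative (\<lambda>v. a *\<^sub>R H x *v v)) (at x)"
    by (simp_all add: scaleR_matrix_vector_assoc)
next
  show "continuous_on S (\<lambda>x. a *\<^sub>R H x)"
    using assms unfolding C2_on_def by (intro continuous_intros) auto
qed

lemma C2_closure_if_C2_on_UNIV:
  assumes "C2_on UNIV w g H"
  shows "C2_closure \<Omega> w g H"
proof -
  have "isCont w x" "isCont g x" for x
    using assms has_derivative_continuous unfolding C2_on_def by blast+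
  then show ?thesis
    using assms unfolding C2_closure_def C2_on_def
    by (auto intro: continuous_at_imp_continuous_on continuous_on_subset)
qed

lemma visc_sub_if_Fk_frame_ge:
  fixes w :: "real^'n \<Rightarrow> real"
  assumes V: "open V" and C2: "C2_on V w g H" and kn: "k \<le> CARD('n)"
    and frame: "\<forall>x\<in>V. Fk_frame_ge k h (H x) (g x) (- (c * w x))"
  shows "visc_sub k h c V w"
  unfolding visc_sub_def
proof (intro ballI allI impI)
  fix x \<phi> g\<phi> H\<phi> r
  assume x: "x \<in> V" and touch: "0 < r \<and> ball x r \<subseteq> V \<and> C2_on (ball x r) \<phi> g\<phi> H\<phi> \<and>
      (\<forall>y\<in>ball x r. w y \<le> \<phi> y) \<and> \<phi> x = w x"
  define B where "B = ball x r"
  have B: "open B" "x \<in> B" using touch by (auto simp: B_def)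
  have C2\<phi>: "C2_on B \<phi> g\<phi> H\<phi>" using touch by (simp add: B_def)
  have C2_diff: "C2_on B (\<lambda>y. \<phi> y - w y) (\<lambda>y. g\<phi> y - g y) (\<lambda>y. H\<phi> y - H y)"
    using C2_on_diff[OF C2\<phi> C2_on_subset[OF C2]] touch by (simp add: B_def)
  have min: "\<forall>y\<in>B. \<phi> x - w x \<le> \<phi> y - w y" using touch by (auto simp: B_def)
  have "((\<lambda>y. \<phi> y - w y) has_derivative (\<lambda>v. (g\<phi> x - g x) \<bullet> v)) (at x)"
    using C2_diff B(2) by (simp add: C2_on_def)
  then have "g\<phi> x - g x = 0" by (rule gradient_eq_0_at_min[OF B _ min])
  moreover have "0 \<le> ((H\<phi> x - H x) *v v) \<bullet> v" for v
    using hessian_nonneg_at_min[OF B C2_diff min] .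
  ultimately have "g\<phi> x = g x" "\<forall>v. (H x *v v) \<bullet> v \<le> (H\<phi> x *v v) \<bullet> v"
    by (simp_all add: matrix_vector_mult_diff_rdistrib inner_diff_left)
  then have "Fk_frame_ge k h (H\<phi> x) (g\<phi> x) (- (c * w x))"
    using Fk_frame_ge_mono[of k h "H x" "g x" "- (c * w x)"] frame x by simp
  then have "- (c * w x) \<le> Fk k h (H\<phi> x) (g\<phi> x)"
    by (rule Fk_ge_if_Fk_frame_ge[OF C2_on_hessian_transpose[OF B C2\<phi>] kn])
  then show "0 \<le> Fk k h (H\<phi> x) (g\<phi> x) + c * w x" by linarith
qed

section \<open>The barrier of a single ball\<close>

definition reg_dist :: "real \<Rightarrow> real^'n \<Rightarrow> real^'n \<Rightarrow> real" where
  "reg_dist \<rho> c x = sqrt (\<rho>^2 + (norm (x - c))^2)"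

definition bump_weight :: "nat \<Rightarrow> real \<Rightarrow> real \<Rightarrow> real \<Rightarrow> real" where
  "bump_weight k h \<rho> t = \<rho>^k * exp (h * t) / t^k"

definition bump_profile :: "nat \<Rightarrow> real \<Rightarrow> real \<Rightarrow> real \<Rightarrow> real" where
  "bump_profile k h \<rho> t = integral {\<rho>/2..t} (\<lambda>s. s * bump_weight k h \<rho> s)"

definition outer_product :: "real^'n \<Rightarrow> real^'n^'n" where
  "outer_product z = (\<chi> i j. z $ i * z $ j)"

definition bump :: "nat \<Rightarrow> real \<Rightarrow> real \<Rightarrow> real^'n \<Rightarrow> real^'n \<Rightarrow> real" where
  "bump k h \<rho> c x = bump_profile k h \<rho> (reg_dist \<rho> c x)"

definition bump_grad :: "nat \<Rightarrow> real \<Rightarrow> real \<Rightarrow> real^'n \<Rightarrow> real^'n \<Rightarrow> real^'n" where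
  "bump_grad k h \<rho> c x = bump_weight k h \<rho> (reg_dist \<rho> c x) *\<^sub>R (x - c)"

definition bump_hess :: "nat \<Rightarrow> real \<Rightarrow> real \<Rightarrow> real^'n \<Rightarrow> real^'n \<Rightarrow> real^'n^'n" where
  "bump_hess k h \<rho> c x =
     (let \<tau> = reg_dist \<rho> c x; \<phi> = bump_weight k h \<rho> \<tau>
      in \<phi> *\<^sub>R mat 1 + (\<phi> * (h - real k / \<tau>) / \<tau>) *\<^sub>R outer_product (x - c))"

lemma outer_product_matrix_vector_mult: "outer_product z *v v = (z \<bullet> v) *\<^sub>R z"
  by (simp add: vec_eq_iff outer_product_def matrix_vector_mult_def inner_vec_def sum_distrib_left mult_ac)

lemma reg_dist_sq: "(reg_dist \<rho> c x)^2 = \<rho>^2 + (norm (x - c))^2"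
  by (simp add: reg_dist_def)

lemma reg_dist_ge: "\<rho> \<le> reg_dist \<rho> c x"
  unfolding reg_dist_def by (rule real_le_rsqrt) simp

lemma reg_dist_pos: "\<rho> > 0 \<Longrightarrow> reg_dist \<rho> c x > 0"
  using reg_dist_ge[of \<rho> c x] by linarith

lemma reg_dist_le:
  assumes "\<rho> \<ge> 0"
  shows "reg_dist \<rho> c x \<le> \<rho> + norm (x - c)"
proof (rule power2_le_imp_le)
  show "(reg_dist \<rho> c x)^2 \<le> (\<rho> + norm (x - c))^2"
    using assms by (simp add: reg_dist_sq power2_sum)
qed (use assms in simp)

lemma reg_dist_le_diameter:
  assumes "bounded \<Omega>" "c \<in> closure \<Omega>" "x \<in> closure \<Omega>" "\<rho> \<ge> 0"
  shows "reg_dist \<rho> c x \<le> diameter \<Omega> + \<rho>"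
proof -
  have "norm (x - c) \<le> diameter (closure \<Omega>)"
    using diameter_bounded_bound[OF bounded_closure[OF assms(1)] assms(3,2)] by (simp add: dist_norm)
  then show ?thesis
    using reg_dist_le[OF assms(4), of c x] diameter_closure[OF assms(1)] by simp
qed

lemma has_derivative_reg_dist:
  assumes "\<rho> > 0"
  shows "(reg_dist \<rho> c has_derivative (\<lambda>v. ((x - c) \<bullet> v) / reg_dist \<rho> c x)) (at x)"
proof -
  have "\<rho>^2 + (x - c) \<bullet> (x - c) > 0" using assms by (simp add: add_pos_nonneg)
  then have "((\<lambda>x. sqrt (\<rho>^2 + (x - c) \<bullet> (x - c))) has_derivative
      (\<lambda>v. inverse (sqrt (\<rho>^2 + (x - c) \<bullet> (x - c))) / 2 * ((x - c) \<bullet> v + v \<bullet> (x - c)))) (at x)"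
    by (auto intro!: derivative_eq_intros)
  then show ?thesis
    by (simp add: reg_dist_def[abs_def] power2_norm_eq_inner inner_commute field_simps)
qed

lemma bump_weight_pos: "\<rho> > 0 \<Longrightarrow> t > 0 \<Longrightarrow> bump_weight k h \<rho> t > 0"
  by (simp add: bump_weight_def)

lemma has_real_derivative_bump_weight:
  assumes "t > 0"
  shows "(bump_weight k h \<rho> has_real_derivative bump_weight k h \<rho> t * (h - real k / t)) (at t)"
proof (cases k)
  case 0
  then show ?thesis unfolding bump_weight_def[abs_def] by (auto intro!: derivative_eq_intros)
next
  case (Suc m)
  have "0 < m \<Longrightarrow> t * t^(m - 1) = t^m" by (cases m) simp_all
  then show ?thesis unfolding bump_weight_def[abs_def]
    using Suc assms by (auto intro!: derivative_eq_intros simp: field_simps)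
qed

lemma continuous_on_bump_integrand:
  "\<forall>t\<in>S. t > 0 \<Longrightarrow> continuous_on S (\<lambda>t. t * bump_weight k h \<rho> t)"
  unfolding bump_weight_def by (auto intro!: continuous_intros)

lemma has_real_derivative_bump_profile:
  assumes "\<rho> > 0" "t > \<rho> / 2"
  shows "(bump_profile k h \<rho> has_real_derivative t * bump_weight k h \<rho> t) (at t)"
proof -
  have "continuous_on {\<rho>/2..t+1} (\<lambda>s. s * bump_weight k h \<rho> s)"
    using assms by (intro continuous_on_bump_integrand) auto
  from integral_has_real_derivative[OF this, of t]
  have "(bump_profile k h \<rho> has_real_derivative t * bump_weight k h \<rho> t) (at t within {\<rho>/2..t+1})"
    using assms by (simp add: bump_profile_def[abs_def])
  moreover have "at t within {\<rho>/2..t+1} = at t" using assms by (intro at_within_Icc_at) auto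
  ultimately show ?thesis by simp
qed

lemma has_derivative_bump:
  assumes "\<rho> > 0"
  shows "(bump k h \<rho> c has_derivative (\<lambda>v. bump_grad k h \<rho> c x \<bullet> v)) (at x)"
proof -
  define \<tau> where "\<tau> = reg_dist \<rho> c x"
  have "\<tau> > \<rho> / 2" using reg_dist_ge[of \<rho> c x] assms by (simp add: \<tau>_def)
  from has_derivative_compose[OF has_derivative_reg_dist[OF assms, of c x]
      has_field_derivative_imp_has_derivative[OF has_real_derivative_bump_profile[OF assms this[unfolded \<tau>_def]]]]
  have "(bump k h \<rho> c has_derivative (\<lambda>v. \<tau> * bump_weight k h \<rho> \<tau> * ((x - c) \<bullet> v / \<tau>))) (at x)"
    by (simp add: bump_def[abs_def] o_def \<tau>_def)
  then show ?thesis
    using reg_dist_pos[OF assms, of c x] by (simp add: bump_grad_def \<tau>_def[symmetric])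
qed

lemma has_derivative_bump_grad:
  assumes "\<rho> > 0"
  shows "(bump_grad k h \<rho> c has_derivative (\<lambda>v. bump_hess k h \<rho> c x *v v)) (at x)"
proof -
  define \<tau> where "\<tau> = reg_dist \<rho> c x"
  define \<phi> where "\<phi> = bump_weight k h \<rho> \<tau>"
  from has_derivative_compose[OF has_derivative_reg_dist[OF assms, of c x]
      has_field_derivative_imp_has_derivative[OF has_real_derivative_bump_weight[OF reg_dist_pos[OF assms, of c x]]]]
  have "((\<lambda>x. bump_weight k h \<rho> (reg_dist \<rho> c x)) has_derivative
      (\<lambda>v. \<phi> * (h - real k / \<tau>) * ((x - c) \<bullet> v / \<tau>))) (at x)"
    by (simp add: o_def \<tau>_def \<phi>_def)
  from has_derivative_scaleR[OF this has_derivative_diff[OF has_derivative_ident has_derivative_const]]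
  have "(bump_grad k h \<rho> c has_derivative
      (\<lambda>v. \<phi> *\<^sub>R v + (\<phi> * (h - real k / \<tau>) * ((x - c) \<bullet> v / \<tau>)) *\<^sub>R (x - c))) (at x)"
    by (simp add: bump_grad_def[abs_def] \<phi>_def \<tau>_def)
  then show ?thesis
    by (simp add: bump_hess_def Let_def \<phi>_def \<tau>_def matrix_vector_mult_add_rdistrib
        outer_product_matrix_vector_mult mat_matrix_vector_mult flip: scaleR_matrix_vector_assoc)
qed

lemma C2_on_bump:
  assumes "\<rho> > 0"
  shows "C2_on UNIV (bump k h \<rho> c) (bump_grad k h \<rho> c) (bump_hess k h \<rho> c)"
  unfolding C2_on_def
proof (intro conjI ballI has_derivative_bump has_derivative_bump_grad assms)
  have \<tau>: "continuous_on UNIV (reg_dist \<rho> c)"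
    using has_derivative_continuous[OF has_derivative_reg_dist[OF assms]]
    by (auto simp: continuous_on_eq_continuous_at)
  have "isCont (\<lambda>x. bump_weight k h \<rho> (reg_dist \<rho> c x)) x" for x
    using has_derivative_continuous[OF has_derivative_reg_dist[OF assms]]
      DERIV_isCont[OF has_real_derivative_bump_weight[OF reg_dist_pos[OF assms]]]
    by (rule isCont_o2)
  then have \<phi>: "continuous_on UNIV (\<lambda>x. bump_weight k h \<rho> (reg_dist \<rho> c x))"
    by (simp add: continuous_on_eq_continuous_at)
  have outer: "continuous_on UNIV (\<lambda>x. outer_product (x - c))"
    unfolding outer_product_def by (intro continuous_intros)
  show "continuous_on UNIV (bump_hess k h \<rho> c)"
    unfolding bump_hess_def Let_def
    using reg_dist_pos[OF assms, of c]
    by (intro continuous_on_add continuous_on_scaleR continuous_on_mult continuous_on_divide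
        continuous_on_diff continuous_on_const \<tau> \<phi> outer) (metis less_irrefl)+
qed

lemma frame_trace_bump_hess:
  assumes "orthonormal_frame u S"
  shows "frame_trace (bump_hess k h \<rho> c x) u S =
    (let \<tau> = reg_dist \<rho> c x; \<phi> = bump_weight k h \<rho> \<tau>
     in \<phi> * real (card S) + \<phi> * (h - real k / \<tau>) / \<tau> * (\<Sum>i\<in>S. ((x - c) \<bullet> u i)^2))"
proof -
  have "u i \<bullet> u i = 1" if "i \<in> S" for i
    using assms that by (simp add: orthonormal_frame_def)
  then show ?thesis
    by (simp add: frame_trace_def bump_hess_def Let_def matrix_vector_mult_add_rdistrib
        outer_product_matrix_vector_mult mat_matrix_vector_mult inner_add_right sum.distrib
        sum_distrib_left power2_eq_square inner_commute mult_ac flip: scaleR_matrix_vector_assoc)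
qed

lemma radial_trace_estimate:
  fixes \<tau> m \<rho> h q :: real and k :: nat
  assumes \<tau>: "\<tau> > 0" and m: "m \<ge> 0" and \<tau>_sq: "\<tau>^2 = \<rho>^2 + m^2"
    and hk: "h * \<tau> \<le> real k" and q: "0 \<le> q" "q \<le> m^2"
  shows "real k * \<rho>^2 / (2 * \<tau>^2) \<le> real k + (h - real k / \<tau>) / \<tau> * q - h * m"
proof -
  have "m \<le> \<tau>" using \<tau>_sq \<tau> m by (metis le_add_same_cancel2 power2_le_imp_le zero_le_power2 less_imp_le)
  then have "h * \<tau> * (m * (\<tau> - m)) \<le> real k * (m * (\<tau> - m))"
    using hk m by (intro mult_right_mono) auto
  also have "\<dots> \<le> real k * (\<rho>^2 / 2)"
  proof -
    have "0 \<le> (\<tau> - m)^2" by simp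
    then have "m * (\<tau> - m) \<le> \<rho>^2 / 2" using \<tau>_sq by (simp add: power2_eq_square algebra_simps)
    then show ?thesis by (intro mult_left_mono) auto
  qed
  moreover have "real k * \<tau>^2 + (h * \<tau> - real k) * m^2 - h * m * \<tau>^2
      = real k * \<rho>^2 - h * \<tau> * (m * (\<tau> - m))"
  proof -
    have "h * \<tau> * (m * (\<tau> - m)) = h * m * \<tau>^2 - h * \<tau> * m^2" by (simp add: algebra_simps power2_eq_square)
    then show ?thesis unfolding \<tau>_sq by (simp add: algebra_simps)
  qed
  ultimately have "real k * \<rho>^2 / 2 \<le> real k * \<tau>^2 + (h * \<tau> - real k) * m^2 - h * m * \<tau>^2"
    by linarith
  also have "\<dots> \<le> real k * \<tau>^2 + (h * \<tau> - real k) * q - h * m * \<tau>^2"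
    using hk q by (simp add: mult_left_mono_neg)
  finally show ?thesis
    using \<tau> by (simp add: field_simps power2_eq_square)
qed

lemma bump_weight_ge:
  assumes "\<rho> > 0" "h \<ge> 0" "0 < t" "t \<le> 2 * \<rho>"
  shows "1 / 2^k \<le> bump_weight k h \<rho> t"
proof -
  have "t^k \<le> (2 * \<rho>)^k" using assms by (intro power_mono) auto
  then have "\<rho>^k / (2 * \<rho>)^k \<le> \<rho>^k / t^k"
    using assms by (intro divide_left_mono) auto
  also have "\<dots> \<le> \<rho>^k * exp (h * t) / t^k"
    using assms by (intro divide_right_mono) auto
  finally show ?thesis using assms(1) by (simp add: bump_weight_def power_mult_distrib)
qed

lemma bump_weight_trace_ge_in_ball:
  assumes \<rho>: "\<rho> > 0" and h: "h \<ge> 0" and k1: "k \<ge> 1" and \<tau>_sq: "\<tau>^2 = \<rho>^2 + m^2" and \<tau>: "\<tau> > 0"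
    and m: "0 \<le> m" "m < \<rho>"
  shows "1 / (4 * 2^k) \<le> bump_weight k h \<rho> \<tau> * (real k * \<rho>^2 / (2 * \<tau>^2))"
proof -
  have "m^2 \<le> \<rho>^2" using m by (intro power_mono) auto
  then have \<tau>_sq_le: "\<tau>^2 \<le> 2 * \<rho>^2" using \<tau>_sq by linarith
  then have "\<tau>^2 \<le> (2 * \<rho>)^2" by (simp add: power_mult_distrib) (use zero_le_power2[of \<rho>] in linarith)
  then have "\<tau> \<le> 2 * \<rho>" by (rule power2_le_imp_le) (use \<rho> in simp)
  then have "1 / 2^k \<le> bump_weight k h \<rho> \<tau>" by (rule bump_weight_ge[OF \<rho> h \<tau>])
  moreover have "1 / 4 \<le> real k * \<rho>^2 / (2 * \<tau>^2)"
  proof -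
    have "1 / 4 = \<rho>^2 / (2 * (2 * \<rho>^2))" using \<rho> by simp
    also have "\<dots> \<le> \<rho>^2 / (2 * \<tau>^2)"
      using \<tau>_sq_le \<tau> \<rho> by (intro divide_left_mono) auto
    also have "\<dots> \<le> real k * \<rho>^2 / (2 * \<tau>^2)"
      using k1 by (intro divide_right_mono) (auto intro: mult_le_cancel_right1[THEN iffD2])
    finally show ?thesis .
  qed
  ultimately have "1 / 2^k * (1 / 4) \<le> bump_weight k h \<rho> \<tau> * (real k * \<rho>^2 / (2 * \<tau>^2))"
    using bump_weight_pos[OF \<rho> \<tau>, of k h] by (intro mult_mono) simp_all
  then show ?thesis by simp
qed

lemma Fk_frame_ge_bump:
  fixes c x :: "real^'n"
  assumes \<rho>: "\<rho> > 0" and h: "h \<ge> 0" and k1: "k \<ge> 1" and hk: "h * reg_dist \<rho> c x \<le> real k"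
  shows "Fk_frame_ge k h (bump_hess k h \<rho> c x) (bump_grad k h \<rho> c x)
    (if norm (x - c) < \<rho> then 1 / (4 * 2^k) else 0)"
  unfolding Fk_frame_ge_def
proof (intro allI impI)
  fix u :: "'n \<Rightarrow> real^'n" and S assume frame: "orthonormal_frame u S \<and> card S = k"
  then have "finite S" using k1 by (metis card.infinite not_one_le_zero)
  define \<tau> where "\<tau> = reg_dist \<rho> c x"
  define \<phi> where "\<phi> = bump_weight k h \<rho> \<tau>"
  define m where "m = norm (x - c)"
  define q where "q = (\<Sum>i\<in>S. ((x - c) \<bullet> u i)^2)"
  have \<tau>: "\<tau> > 0" and \<phi>: "\<phi> > 0" using \<rho> by (simp_all add: \<tau>_def \<phi>_def reg_dist_pos bump_weight_pos)
  have \<tau>_sq: "\<tau>^2 = \<rho>^2 + m^2" by (simp add: \<tau>_def m_def reg_dist_sq)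
  have q: "0 \<le> q" "q \<le> m^2"
    using sum_inner_frame_sq_le[of u S "x - c"] frame \<open>finite S\<close> by (auto simp: q_def m_def intro: sum_nonneg)
  have "frame_trace (bump_hess k h \<rho> c x) u S = \<phi> * real k + \<phi> * (h - real k / \<tau>) / \<tau> * q"
    using frame by (simp add: frame_trace_bump_hess Let_def flip: \<tau>_def \<phi>_def q_def)
  moreover have "norm (bump_grad k h \<rho> c x) = \<phi> * m"
    using \<phi> by (simp add: bump_grad_def flip: \<tau>_def \<phi>_def m_def)
  ultimately have "frame_trace (bump_hess k h \<rho> c x) u S - h * norm (bump_grad k h \<rho> c x)
      = \<phi> * (real k + (h - real k / \<tau>) / \<tau> * q - h * m)"
    by (simp add: algebra_simps)
  also have "\<dots> \<ge> \<phi> * (real k * \<rho>^2 / (2 * \<tau>^2))"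
    using radial_trace_estimate[OF \<tau> _ \<tau>_sq _ q, of h k] hk \<phi> by (intro mult_left_mono) (simp_all add: \<tau>_def m_def)
  finally have lower: "\<phi> * (real k * \<rho>^2 / (2 * \<tau>^2))
      \<le> frame_trace (bump_hess k h \<rho> c x) u S - h * norm (bump_grad k h \<rho> c x)" .
  show "(if norm (x - c) < \<rho> then 1 / (4 * 2^k) else 0)
      \<le> frame_trace (bump_hess k h \<rho> c x) u S - h * norm (bump_grad k h \<rho> c x)"
  proof (cases "m < \<rho>")
    case True
    then show ?thesis
      using lower bump_weight_trace_ge_in_ball[OF \<rho> h k1 \<tau>_sq \<tau>] by (simp add: m_def \<phi>_def)
  next
    case False
    have "0 \<le> \<phi> * (real k * \<rho>^2 / (2 * \<tau>^2))" using \<phi> by simp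
    then show ?thesis using lower False by (simp add: m_def)
  qed
qed

lemma Fk_frame_ge_bump_sum:
  fixes c :: "'a \<Rightarrow> real^'n"
  assumes "finite J" "0 \<le> h" "1 \<le> k"
    and "\<forall>j\<in>J. 0 < r j \<and> h * reg_dist (r j) (c j) x \<le> real k"
  shows "Fk_frame_ge k h ((4 * 2^k) *\<^sub>R (\<Sum>j\<in>J. bump_hess k h (r j) (c j) x))
      ((4 * 2^k) *\<^sub>R (\<Sum>j\<in>J. bump_grad k h (r j) (c j) x)) (indicator (\<Union>j\<in>J. ball (c j) (r j)) x)"
proof -
  define L where "L j = (if norm (x - c j) < r j then 1 / (4 * 2^k) else (0::real))" for j
  have "Fk_frame_ge k h (\<Sum>j\<in>J. bump_hess k h (r j) (c j) x) (\<Sum>j\<in>J. bump_grad k h (r j) (c j) x) (\<Sum>j\<in>J. L j)"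
    using assms unfolding L_def by (intro Fk_frame_ge_sum ballI Fk_frame_ge_bump) auto
  then have "Fk_frame_ge k h ((4 * 2^k) *\<^sub>R (\<Sum>j\<in>J. bump_hess k h (r j) (c j) x))
      ((4 * 2^k) *\<^sub>R (\<Sum>j\<in>J. bump_grad k h (r j) (c j) x)) ((4 * 2^k) * (\<Sum>j\<in>J. L j))"
    by (rule Fk_frame_ge_scaleR[rotated]) simp
  moreover have "indicator (\<Union>j\<in>J. ball (c j) (r j)) x \<le> (4 * 2^k) * (\<Sum>j\<in>J. L j)"
  proof (cases "x \<in> (\<Union>j\<in>J. ball (c j) (r j))")
    case True
    then obtain j0 where "j0 \<in> J" "norm (x - c j0) < r j0" by (auto simp: dist_norm norm_minus_commute)
    then have "L j0 \<le> (\<Sum>j\<in>J. L j)"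
      using assms(1) by (intro member_le_sum) (auto simp: L_def)
    then have "(4 * 2^k) * L j0 \<le> (4 * 2^k) * (\<Sum>j\<in>J. L j)" by simp
    then show ?thesis using True \<open>norm (x - c j0) < r j0\<close> by (simp add: L_def)
  next
    case False
    have "0 \<le> (\<Sum>j\<in>J. L j)" by (intro sum_nonneg) (auto simp: L_def)
    then show ?thesis using False by simp
  qed
  ultimately show ?thesis by (rule Fk_frame_ge_mono) simp
qed

definition antideriv_powr :: "nat \<Rightarrow> real \<Rightarrow> real" where
  "antideriv_powr k s = (if k = 2 then ln s else s powr (2 - real k) / (2 - real k))"

lemma has_real_derivative_antideriv_powr:
  assumes "s > 0"
  shows "(antideriv_powr k has_real_derivative s powr (1 - real k)) (at s)"
proof (cases "k = 2")
  case True
  then show ?thesis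
    using assms by (auto intro!: derivative_eq_intros simp: antideriv_powr_def[abs_def] powr_minus_divide)
next
  case False
  then have "2 - real k \<noteq> 0" by simp
  then show ?thesis
    using assms False by (auto intro!: derivative_eq_intros simp: antideriv_powr_def[abs_def])
qed

lemma has_integral_powr_antideriv:
  assumes "0 < a" "a \<le> b"
  shows "((\<lambda>s. s powr (1 - real k)) has_integral (antideriv_powr k b - antideriv_powr k a)) {a..b}"
proof (rule fundamental_theorem_of_calculus[OF assms(2)])
  fix s assume "s \<in> {a..b}"
  then have "s > 0" using assms by auto
  then show "(antideriv_powr k has_vector_derivative s powr (1 - real k)) (at s within {a..b})"
    using has_real_derivative_antideriv_powr has_real_derivative_iff_has_vector_derivative
    by (metis has_vector_derivative_at_within)
qed

lemma bump_integrand_eq: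
  assumes "s > 0"
  shows "s * bump_weight k h \<rho> s = \<rho>^k * exp (h * s) * s powr (1 - real k)"
  using assms by (simp add: bump_weight_def powr_diff powr_realpow)

lemma bump_profile_nonneg:
  assumes "\<rho> > 0" "\<rho> / 2 \<le> t"
  shows "0 \<le> bump_profile k h \<rho> t"
  unfolding bump_profile_def
proof (rule integral_nonneg)
  show "(\<lambda>s. s * bump_weight k h \<rho> s) integrable_on {\<rho>/2..t}"
    using assms by (intro integrable_continuous_interval continuous_on_bump_integrand) auto
  show "0 \<le> s * bump_weight k h \<rho> s" if "s \<in> {\<rho>/2..t}" for s
    using that assms bump_weight_pos[of \<rho> s k h] by auto
qed

lemma bump_profile_le_antideriv:
  assumes \<rho>: "\<rho> > 0" and t: "\<rho> / 2 \<le> t" and h: "h \<ge> 0" and ht: "h * t \<le> real k"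
  shows "bump_profile k h \<rho> t \<le> \<rho>^k * exp (real k) * (antideriv_powr k t - antideriv_powr k (\<rho>/2))"
proof -
  have I: "((\<lambda>s. \<rho>^k * exp (real k) * s powr (1 - real k)) has_integral
      \<rho>^k * exp (real k) * (antideriv_powr k t - antideriv_powr k (\<rho>/2))) {\<rho>/2..t}"
    using has_integral_mult_right[OF has_integral_powr_antideriv] \<rho> t by simp
  have "integral {\<rho>/2..t} (\<lambda>s. s * bump_weight k h \<rho> s)
      \<le> integral {\<rho>/2..t} (\<lambda>s. \<rho>^k * exp (real k) * s powr (1 - real k))"
  proof (rule integral_le)
    show "(\<lambda>s. s * bump_weight k h \<rho> s) integrable_on {\<rho>/2..t}"
      using \<rho> by (intro integrable_continuous_interval continuous_on_bump_integrand) auto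
    show "(\<lambda>s. \<rho>^k * exp (real k) * s powr (1 - real k)) integrable_on {\<rho>/2..t}"
      using I by blast
  next
    fix s assume s: "s \<in> {\<rho>/2..t}"
    then have "exp (h * s) \<le> exp (real k)"
      using h ht mult_left_mono[of s t h] by simp
    then show "s * bump_weight k h \<rho> s \<le> \<rho>^k * exp (real k) * s powr (1 - real k)"
      using s \<rho> by (simp add: bump_integrand_eq mult_right_mono)
  qed
  then show ?thesis unfolding integral_unique[OF I] bump_profile_def .
qed

lemma power_mult_half_powr:
  fixes \<rho> :: real
  assumes \<rho>: "\<rho> > 0" and k: "k \<ge> 2"
  shows "\<rho>^k * (\<rho>/2) powr (2 - real k) = \<rho>^2 * 2^(k - 2)"
proof -
  have "\<rho>^k * \<rho> powr (2 - real k) = \<rho> powr (real k) * \<rho> powr (2 - real k)"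
    using \<rho> by (simp add: powr_realpow)
  also have "\<dots> = \<rho> powr (real k + (2 - real k))" by (simp only: powr_add)
  also have "\<dots> = \<rho>^2" using \<rho> by (simp add: powr_numeral)
  finally have "\<rho>^k * \<rho> powr (2 - real k) = \<rho>^2" .
  moreover have "1 / 2 powr (2 - real k) = (2::real) powr real (k - 2)"
    using k by (simp add: powr_diff of_nat_diff)
  ultimately show ?thesis
    using \<rho> by (simp add: powr_divide powr_realpow) (metis times_divide_eq_right mult_1_right)
qed

lemma antideriv_powr_diff_le_Psi:
  assumes \<rho>: "\<rho> > 0" and k1: "k \<ge> 1" and R: "4 * \<rho> \<le> R" and t: "\<rho> / 2 \<le> t" "t \<le> 2 * R"
  shows "\<rho>^k * (antideriv_powr k t - antideriv_powr k (\<rho>/2)) \<le> 2^(k+1) * Psi k R \<rho>"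
proof -
  have R_pos: "R > 0" and t_pos: "t > 0" using \<rho> R t by linarith+
  consider "k = 1" | "k = 2" | "k \<ge> 3" using k1 by linarith
  then show ?thesis
  proof cases
    case 1
    then have "antideriv_powr k t - antideriv_powr k (\<rho>/2) \<le> 2 * R"
      using t t_pos \<rho> by (simp add: antideriv_powr_def)
    then show ?thesis using 1 \<rho> R_pos by (simp add: Psi_def)
  next
    case 2
    have "ln 4 \<le> ln (R / \<rho>)" using R \<rho> by (simp add: pos_le_divide_eq mult.commute)
    moreover have "ln (4::real) = 2 * ln 2" using ln_realpow[of 2 2] by simp
    moreover have "antideriv_powr k t - antideriv_powr k (\<rho>/2) \<le> ln (2 * R) - ln (\<rho>/2)"
      using 2 t t_pos \<rho> by (simp add: antideriv_powr_def)
    moreover have "ln (2 * R) - ln (\<rho>/2) = 2 * ln 2 + ln (R / \<rho>)"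
      using R_pos \<rho> by (simp add: ln_mult ln_div)
    ultimately have "antideriv_powr k t - antideriv_powr k (\<rho>/2) \<le> 2 * \<bar>ln (R / \<rho>)\<bar>"
      by linarith
    then have "\<rho>^2 * (antideriv_powr k t - antideriv_powr k (\<rho>/2)) \<le> \<rho>^2 * (2 * \<bar>ln (R / \<rho>)\<bar>)"
      by (intro mult_left_mono) auto
    then show ?thesis using 2 \<rho> by (simp add: Psi_def)
  next
    case 3
    have "antideriv_powr k t - antideriv_powr k (\<rho>/2)
        = (t powr (2 - real k) - (\<rho>/2) powr (2 - real k)) / (2 - real k)"
      using 3 by (simp add: antideriv_powr_def diff_divide_distrib)
    also have "\<dots> = ((\<rho>/2) powr (2 - real k) - t powr (2 - real k)) / (real k - 2)"
      by (metis minus_diff_eq divide_minus_right divide_minus_left)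
    also have "\<dots> \<le> (\<rho>/2) powr (2 - real k) / (real k - 2)"
      using 3 by (intro divide_right_mono) auto
    also have "\<dots> \<le> (\<rho>/2) powr (2 - real k)"
      using 3 divide_left_mono[of 1 "real k - 2" "(\<rho>/2) powr (2 - real k)"] by simp
    finally have "\<rho>^k * (antideriv_powr k t - antideriv_powr k (\<rho>/2)) \<le> \<rho>^k * (\<rho>/2) powr (2 - real k)"
      by (intro mult_left_mono) (use \<rho> in auto)
    also have "\<rho>^k * (\<rho>/2) powr (2 - real k) = \<rho>^2 * 2^(k - 2)"
      using power_mult_half_powr[OF \<rho>] 3 by simp
    also have "\<dots> \<le> \<rho>^2 * 2^(k + 1)" by (intro mult_left_mono power_increasing) auto
    finally show ?thesis using 3 by (simp add: Psi_def mult.commute)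
  qed
qed

lemma bump_profile_le_Psi:
  assumes \<rho>: "\<rho> > 0" and h: "h \<ge> 0" and k1: "k \<ge> 1" and R: "4 * \<rho> \<le> R"
    and t: "\<rho> \<le> t" "t \<le> 2 * R" and ht: "h * t \<le> real k"
  shows "bump_profile k h \<rho> t \<le> 2^(k+1) * exp (real k) * Psi k R \<rho>"
proof -
  have "bump_profile k h \<rho> t \<le> exp (real k) * (\<rho>^k * (antideriv_powr k t - antideriv_powr k (\<rho>/2)))"
    using bump_profile_le_antideriv[OF \<rho> _ h ht] \<rho> t by (simp add: mult_ac)
  also have "\<dots> \<le> exp (real k) * (2^(k+1) * Psi k R \<rho>)"
    using antideriv_powr_diff_le_Psi[OF \<rho> k1 R _ t(2)] \<rho> t by simp
  finally show ?thesis by (simp add: mult_ac)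
qed

lemma bump_bounds_in_closure:
  fixes c x :: "real^'n"
  assumes \<Omega>: "bounded \<Omega>" and cx: "c \<in> closure \<Omega>" "x \<in> closure \<Omega>" and \<rho>: "0 < \<rho>" "4 * \<rho> \<le> diameter \<Omega>"
    and h: "0 \<le> h" "h * (diameter \<Omega> + \<rho>) \<le> real k" and k1: "1 \<le> k"
  shows "h * reg_dist \<rho> c x \<le> real k" "0 \<le> bump k h \<rho> c x"
    "bump k h \<rho> c x \<le> 2^(k+1) * exp (real k) * Psi k (diameter \<Omega>) \<rho>"
proof -
  have \<tau>: "reg_dist \<rho> c x \<le> diameter \<Omega> + \<rho>" using reg_dist_le_diameter[OF \<Omega> cx] \<rho> by simp
  show h\<tau>: "h * reg_dist \<rho> c x \<le> real k" using mult_left_mono[OF \<tau> h(1)] h(2) by linarith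
  show "0 \<le> bump k h \<rho> c x"
    unfolding bump_def using \<rho> reg_dist_ge[of \<rho> c x] by (intro bump_profile_nonneg) auto
  show "bump k h \<rho> c x \<le> 2^(k+1) * exp (real k) * Psi k (diameter \<Omega>) \<rho>"
    unfolding bump_def using \<rho> k1 h(1) h\<tau> \<tau> reg_dist_ge[of \<rho> c x]
    by (intro bump_profile_le_Psi) auto
qed

section \<open>Barriers from coverings\<close>

lemma finite_ball_cover_if_gen_hausdorff_less:
  fixes E :: "'a::metric_space set"
  assumes E: "compact E" and less: "gen_hausdorff \<Psi> E < ennreal Q" and \<delta>: "\<delta> > 0"
    and \<Psi>_nonneg: "\<And>t. t > 0 \<Longrightarrow> \<Psi> t \<ge> 0"
  obtains J :: "nat set" and r c where "finite J"
    "\<forall>j\<in>J. 0 < r j \<and> r j \<le> \<delta> \<and> (\<exists>e\<in>E. dist (c j) e < r j)"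
    "E \<subseteq> (\<Union>j\<in>J. ball (c j) (r j))" "(\<Sum>j\<in>J. \<Psi> (r j)) < Q"
proof -
  have "(INF rc\<in>{(r, c). (\<forall>j::nat. 0 < r j \<and> r j \<le> \<delta>) \<and> E \<subseteq> (\<Union>j. ball (c j) (r j))}.
          (\<Sum>j. ennreal (\<Psi> (fst rc j)))) < ennreal Q"
    using SUP_lessD[OF less[unfolded gen_hausdorff_def]] \<delta> by simp
  then obtain r c where r: "\<forall>j::nat. 0 < r j \<and> r j \<le> \<delta>" and cover: "E \<subseteq> (\<Union>j. ball (c j) (r j))"
      and sum_less: "(\<Sum>j. ennreal (\<Psi> (r j))) < ennreal Q"
    unfolding INF_less_iff by auto
  define J0 where "J0 = {j. \<exists>e\<in>E. dist (c j) e < r j}"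
  have "E \<subseteq> (\<Union>j\<in>J0. ball (c j) (r j))" using cover by (force simp: J0_def)
  then obtain J where J: "J \<subseteq> J0" "finite J" "E \<subseteq> (\<Union>j\<in>J. ball (c j) (r j))"
    using compactE_image[OF E, of J0 "\<lambda>j. ball (c j) (r j)"] by auto
  have nonneg: "\<Psi> (r j) \<ge> 0" for j using \<Psi>_nonneg r by blast
  have "ennreal (\<Sum>j\<in>J. \<Psi> (r j)) = (\<Sum>j\<in>J. ennreal (\<Psi> (r j)))"
    using nonneg by simp
  also have "\<dots> \<le> (\<Sum>j. ennreal (\<Psi> (r j)))"
    by (rule sum_le_suminf[OF summableI J(2)]) simp
  also have "\<dots> < ennreal Q" by (rule sum_less)
  finally have "(\<Sum>j\<in>J. \<Psi> (r j)) < Q"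
    using nonneg by (simp add: ennreal_less_iff sum_nonneg)
  then show ?thesis using J r by (intro that[of J r c]) (auto simp: J0_def)
qed

lemma diameter_pos_if_open:
  fixes \<Omega> :: "'a::euclidean_space set"
  assumes "open \<Omega>" "bounded \<Omega>" "x \<in> \<Omega>"
  shows "diameter \<Omega> > 0"
proof -
  obtain e where "e > 0" "ball x e \<subseteq> \<Omega>" using assms open_contains_ball by blast
  then show ?thesis using diameter_subset[OF _ assms(2), of "ball x e"] by simp
qed

(* 4 * 2^k normalises the lower bound 1 / (4 * 2^k) of one bump on its ball to 1, and
   2^(k+1) * exp k * Psi k R r bounds the bump itself. *)
definition barrier_const :: "nat \<Rightarrow> real" where
  "barrier_const k = 4 * 2^k * (2^(k+1) * exp (real k))"

lemma barrier_const_pos: "barrier_const k > 0"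
  by (simp add: barrier_const_def)

lemma frame_barrier_from_ball_cover:
  fixes \<Omega> E :: "(real^'n) set" and c :: "nat \<Rightarrow> real^'n"
  assumes k1: "1 \<le> k" and h: "0 \<le> h" and \<Omega>: "bounded \<Omega>" and J: "finite J"
    and balls: "\<forall>j\<in>J. 0 < r j \<and> 4 * r j \<le> diameter \<Omega> \<and> h * (diameter \<Omega> + r j) \<le> real k \<and>
      cball (c j) (r j) \<subseteq> \<Omega>"
    and cover: "E \<subseteq> (\<Union>j\<in>J. ball (c j) (r j))"
    and small: "(\<Sum>j\<in>J. Psi k (diameter \<Omega>) (r j)) < Q"
  shows "\<exists>U w g H. open U \<and> E \<subseteq> U \<and> compact (closure U) \<and> closure U \<subseteq> \<Omega> \<and>
      C2_closure \<Omega> w g H \<and> (\<forall>x\<in>closure \<Omega>. - (barrier_const k * Q) \<le> w x \<and> w x < 0) \<and>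
      (\<forall>x\<in>\<Omega>. Fk_frame_ge k h (H x) (g x) (indicator U x))"
proof -
  define U where "U = (\<Union>j\<in>J. ball (c j) (r j))"
  define w where "w x = (4 * 2^k) * (\<Sum>j\<in>J. bump k h (r j) (c j) x) - barrier_const k * Q" for x
  define g where "g x = (4 * 2^k) *\<^sub>R (\<Sum>j\<in>J. bump_grad k h (r j) (c j) x)" for x
  define H where "H x = (4 * 2^k) *\<^sub>R (\<Sum>j\<in>J. bump_hess k h (r j) (c j) x)" for x
  have centre: "c j \<in> closure \<Omega>" if j: "j \<in> J" for j
  proof -
    have "c j \<in> cball (c j) (r j)" using balls j by (simp add: less_imp_le)
    then show ?thesis using balls j closure_subset by blast
  qed
  have bounds: "h * reg_dist (r j) (c j) x \<le> real k" "0 \<le> bump k h (r j) (c j) x"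
    "bump k h (r j) (c j) x \<le> 2^(k+1) * exp (real k) * Psi k (diameter \<Omega>) (r j)"
    if j: "j \<in> J" and x: "x \<in> closure \<Omega>" for j x
  proof -
    have "0 < r j" "4 * r j \<le> diameter \<Omega>" "h * (diameter \<Omega> + r j) \<le> real k" using balls j by auto
    from bump_bounds_in_closure[OF \<Omega> centre[OF j] x this(1,2) h this(3) k1]
    show "h * reg_dist (r j) (c j) x \<le> real k" "0 \<le> bump k h (r j) (c j) x"
      "bump k h (r j) (c j) x \<le> 2^(k+1) * exp (real k) * Psi k (diameter \<Omega>) (r j)" by simp_all
  qed
  have closure_U: "closure U \<subseteq> (\<Union>j\<in>J. cball (c j) (r j))"
    using J by (intro closure_minimal) (auto simp: U_def)
  moreover have "bounded (\<Union>j\<in>J. cball (c j) (r j))" using J by auto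
  ultimately have "compact (closure U)"
    by (simp add: compact_eq_bounded_closed bounded_subset)
  moreover have "closure U \<subseteq> \<Omega>" using closure_U balls by blast
  moreover have "C2_closure \<Omega> w g H"
    unfolding w_def[abs_def] g_def[abs_def] H_def[abs_def] using balls
    by (intro C2_closure_if_C2_on_UNIV C2_on_affine C2_on_sum ballI C2_on_bump) auto
  moreover have "- (barrier_const k * Q) \<le> w x \<and> w x < 0" if x: "x \<in> closure \<Omega>" for x
  proof -
    have "0 \<le> (\<Sum>j\<in>J. bump k h (r j) (c j) x)"
      and "(\<Sum>j\<in>J. bump k h (r j) (c j) x) \<le> 2^(k+1) * exp (real k) * (\<Sum>j\<in>J. Psi k (diameter \<Omega>) (r j))"
      using bounds x by (auto intro: sum_nonneg simp: sum_distrib_left intro!: sum_mono)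
    moreover have "2^(k+1) * exp (real k) * (\<Sum>j\<in>J. Psi k (diameter \<Omega>) (r j)) < 2^(k+1) * exp (real k) * Q"
      using small by simp
    ultimately have "0 \<le> (\<Sum>j\<in>J. bump k h (r j) (c j) x)"
      and "(\<Sum>j\<in>J. bump k h (r j) (c j) x) < 2^(k+1) * exp (real k) * Q" by linarith+
    then show ?thesis by (simp add: w_def barrier_const_def mult_ac)
  qed
  moreover have "Fk_frame_ge k h (H x) (g x) (indicator U x)" if "x \<in> \<Omega>" for x
  proof -
    have "x \<in> closure \<Omega>" using that closure_subset by blast
    then show ?thesis
      unfolding H_def g_def U_def using balls J h k1 bounds(1) by (intro Fk_frame_ge_bump_sum) auto
  qed
  ultimately show ?thesis using cover
    by (intro exI[of _ U] exI[of _ w] exI[of _ g] exI[of _ H]) (auto simp: U_def)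
qed

lemma frame_barrier_exists:
  fixes \<Omega> E :: "(real^'n) set"
  assumes k1: "1 \<le> k" and \<Omega>: "open \<Omega>" "bounded \<Omega>" and E: "compact E" "E \<subseteq> \<Omega>"
    and h: "0 \<le> h" and hR: "h * diameter \<Omega> < real k"
    and Q: "gen_hausdorff (Psi k (diameter \<Omega>)) E < ennreal Q"
  shows "\<exists>U w g H. open U \<and> E \<subseteq> U \<and> compact (closure U) \<and> closure U \<subseteq> \<Omega> \<and>
      C2_closure \<Omega> w g H \<and> (\<forall>x\<in>closure \<Omega>. - (barrier_const k * Q) \<le> w x \<and> w x < 0) \<and>
      (\<forall>x\<in>\<Omega>. Fk_frame_ge k h (H x) (g x) (indicator U x))"
proof (cases "E = {}")
  case True
  have "Q > 0" using Q by (metis ennreal_less_zero_iff not_gr_zero not_less_zero)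
  then show ?thesis
    using frame_barrier_from_ball_cover[OF k1 h \<Omega>(2), of "{}"] True by simp
next
  case False
  define R where "R = diameter \<Omega>"
  have R: "R > 0" using False E(2) diameter_pos_if_open[OF \<Omega>] by (auto simp: R_def)
  obtain d where d: "d > 0" "(\<Union>e\<in>E. cball e d) \<subseteq> \<Omega>"
    using compact_subset_open_imp_cball_epsilon_subset[OF E(1) \<Omega>(1) E(2)] by blast
  define \<delta> where "\<delta> = min (d / 2) (min (R / 4) (if h > 0 then (real k - h * R) / h else 1))"
  have \<delta>: "\<delta> > 0" using d R hR by (simp add: \<delta>_def R_def)
  have h\<delta>: "h * (R + r) \<le> real k" if "r \<le> \<delta>" for r
  proof (cases "h > 0")
    case True
    then have "h * r \<le> real k - h * R" using that by (simp add: \<delta>_def pos_le_divide_eq mult.commute)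
    then show ?thesis by (simp add: algebra_simps)
  qed (use h hR R_def in simp)
  have "0 \<le> Psi k R t" if "t > 0" for t using R that by (simp add: Psi_def)
  from finite_ball_cover_if_gen_hausdorff_less[OF E(1) Q[folded R_def] \<delta> this]
  obtain J :: "nat set" and r c where J: "finite J" and balls: "\<forall>j\<in>J. 0 < r j \<and> r j \<le> \<delta> \<and> (\<exists>e\<in>E. dist (c j) e < r j)"
      and cover: "E \<subseteq> (\<Union>j\<in>J. ball (c j) (r j))" and small: "(\<Sum>j\<in>J. Psi k R (r j)) < Q" .
  have "cball (c j) (r j) \<subseteq> \<Omega>" if j: "j \<in> J" for j
  proof -
    obtain e where e: "e \<in> E" "dist (c j) e < r j" using balls j by blast
    moreover have "2 * r j \<le> d" using bspec[OF balls j] by (simp add: \<delta>_def)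
    ultimately have "cball (c j) (r j) \<subseteq> cball e d" by (simp add: cball_subset_cball_iff)
    then show ?thesis using d(2) e(1) by blast
  qed
  moreover have "0 < r j" "4 * r j \<le> R" "h * (R + r j) \<le> real k" if "j \<in> J" for j
    using bspec[OF balls that] h\<delta> by (auto simp: \<delta>_def)
  ultimately have "\<forall>j\<in>J. 0 < r j \<and> 4 * r j \<le> R \<and> h * (R + r j) \<le> real k \<and> cball (c j) (r j) \<subseteq> \<Omega>"
    by simp
  from frame_barrier_from_ball_cover[OF k1 h \<Omega>(2) J this[unfolded R_def] cover small[unfolded R_def]]
  show ?thesis .
qed

section \<open>Lower bound for the principal eigenvalue\<close>

lemma usc_on_if_continuous_on: "continuous_on S w \<Longrightarrow> usc_on S w"
  unfolding usc_on_def continuous_on_iff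
proof (intro ballI allI impI)
  fix x a assume cont: "\<forall>x\<in>S. \<forall>e>0. \<exists>d>0. \<forall>x'\<in>S. dist x' x < d \<longrightarrow> dist (w x') (w x) < e"
    and "x \<in> S" "w x < a"
  then obtain d where "d > 0" "\<forall>x'\<in>S. dist x' x < d \<longrightarrow> dist (w x') (w x) < a - w x"
    by (meson diff_gt_0_iff_gt)
  then show "\<exists>e>0. \<forall>y\<in>S. dist y x < e \<longrightarrow> w y < a"
    by (intro exI[of _ d]) (auto simp: dist_real_def)
qed

lemma mu_set_ge_if_barrier:
  fixes E U \<Omega> :: "(real^'n) set"
  assumes kn: "k \<le> CARD('n)" and C: "C > 0" and \<Omega>: "open \<Omega>"
    and U: "open U" "E \<subseteq> U" "closure U \<subseteq> \<Omega>"
    and C2: "C2_closure \<Omega> w g H" and w: "\<forall>x\<in>closure \<Omega>. - C \<le> w x \<and> w x < 0"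
    and frame: "\<forall>x\<in>\<Omega>. Fk_frame_ge k h (H x) (g x) (indicator U x)"
  shows "ereal (1 / C) \<le> mu_set k h E"
proof -
  have U_sub: "U \<subseteq> \<Omega>" "closure U \<subseteq> closure \<Omega>" using U(3) closure_subset closure_mono by blast+
  have "Fk_frame_ge k h (H x) (g x) (- (1 / C * w x))" if x: "x \<in> U" for x
  proof (rule Fk_frame_ge_mono)
    show "Fk_frame_ge k h (H x) (g x) (indicator U x)" using frame x U_sub by blast
    have "- C \<le> w x" using w x U_sub closure_subset by blast
    then show "- (1 / C * w x) \<le> indicator U x" using C x by (simp add: field_simps)
  qed simp
  then have "visc_sub k h (1 / C) U w"
    using C2 U_sub by (intro visc_sub_if_Fk_frame_ge[OF U(1) _ kn]) (auto simp: C2_closure_def intro: C2_on_subset)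
  moreover have "usc_on (closure U) w"
    using C2 U_sub by (intro usc_on_if_continuous_on) (auto simp: C2_closure_def intro: continuous_on_subset)
  moreover have "\<forall>x\<in>closure U. w x < 0" using w U_sub by blast
  ultimately have "ereal (1 / C) \<le> mu_open k h U"
    unfolding mu_open_def by (blast intro: Sup_upper)
  also have "\<dots> \<le> mu_set k h E" unfolding mu_set_def using U by (auto intro: SUP_upper)
  finally show ?thesis .
qed

lemma ereal_ge_if_inverse_bounds:
  fixes m :: ereal and C x :: real
  assumes C: "C > 0" and x: "x \<ge> 0" and bound: "\<And>Q. x < Q \<Longrightarrow> ereal (1 / (C * Q)) \<le> m"
  shows "if x = 0 then m = \<infinity> else ereal (1 / (C * x)) \<le> m"
proof -
  have le: "ereal z \<le> m" if "0 < z" "C * x * z < 1" for z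
  proof -
    have "x < 1 / (C * z)" using that C by (simp add: field_simps)
    from bound[OF this] show ?thesis using that C by simp
  qed
  show ?thesis
  proof (cases "x = 0")
    case True
    have "m = \<infinity>"
    proof (rule ccontr)
      assume "m \<noteq> \<infinity>"
      moreover have "ereal 1 \<le> m" using le[of 1] True by simp
      ultimately obtain M where "m = ereal M" by (cases m) auto
      moreover have "0 < max M 0 + 1" "\<not> ereal (max M 0 + 1) \<le> ereal M" by simp_all
      ultimately show False using le[of "max M 0 + 1"] True by simp
    qed
    then show ?thesis using True by simp
  next
    case False
    have "ereal (1 / (C * x)) \<le> m"
    proof (rule dense_le_bounded[of 0])
      show "0 < ereal (1 / (C * x))" using C x False by simp
      fix w assume w: "0 < w" "w < ereal (1 / (C * x))"
      then obtain z where "w = ereal z" "0 < z" "z < 1 / (C * x)" by (cases w) auto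
      then show "w \<le> m" using le[of z] C x False by (simp add: field_simps)
    qed
    then show ?thesis using False by simp
  qed
qed

lemma Fk_barrier_exists:
  fixes \<Omega> E :: "(real^'n) set"
  assumes kn: "k \<le> CARD('n)" and k1: "1 \<le> k" and \<Omega>: "open \<Omega>" "bounded \<Omega>" and E: "compact E" "E \<subseteq> \<Omega>"
    and h: "0 \<le> h" and hR: "h * diameter \<Omega> < real k"
    and Q: "ennreal Q > gen_hausdorff (Psi k (diameter \<Omega>)) E"
  shows "\<exists>U w g H. open U \<and> E \<subseteq> U \<and> compact (closure U) \<and> closure U \<subseteq> \<Omega> \<and>
      C2_closure \<Omega> w g H \<and> (\<forall>x\<in>closure \<Omega>. w x < 0) \<and>
      (\<forall>x\<in>\<Omega>. Fk k h (H x) (g x) \<ge> indicator U x) \<and>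
      (\<forall>x\<in>closure \<Omega>. \<bar>w x\<bar> \<le> barrier_const k * Q) \<and>
      (\<forall>x\<in>U. Fk k h (H x) (g x) + (1 / (barrier_const k * Q)) * w x \<ge> 0) \<and>
      (\<forall>x\<in>\<Omega>. Fk k h (H x) (g x) \<ge> 0)"
proof -
  obtain U w g H where U: "open U" "E \<subseteq> U" "compact (closure U)" "closure U \<subseteq> \<Omega>"
    and C2: "C2_closure \<Omega> w g H" and w: "\<forall>x\<in>closure \<Omega>. - (barrier_const k * Q) \<le> w x \<and> w x < 0"
    and frame: "\<forall>x\<in>\<Omega>. Fk_frame_ge k h (H x) (g x) (indicator U x)"
    using frame_barrier_exists[OF k1 \<Omega> E h hR Q] by blast
  have Fk: "indicator U x \<le> Fk k h (H x) (g x)" if x: "x \<in> \<Omega>" for x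
    using C2 frame x
    by (intro Fk_ge_if_Fk_frame_ge[OF C2_on_hessian_transpose[OF \<Omega>(1) x] kn]) (auto simp: C2_closure_def)
  have "Q > 0" using Q by (metis ennreal_less_zero_iff not_gr_zero not_less_zero)
  then have CQ: "barrier_const k * Q > 0" using barrier_const_pos by simp
  have U_sub: "U \<subseteq> \<Omega>" using U(4) closure_subset by blast
  have "Fk k h (H x) (g x) + (1 / (barrier_const k * Q)) * w x \<ge> 0" if x: "x \<in> U" for x
  proof -
    have "- (barrier_const k * Q) \<le> w x" using w x U_sub closure_subset by blast
    then have "- 1 \<le> (1 / (barrier_const k * Q)) * w x" using CQ by (simp add: field_simps)
    moreover have "1 \<le> Fk k h (H x) (g x)" using Fk[of x] x U_sub by auto
    ultimately show ?thesis by linarith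
  qed
  moreover have "\<bar>w x\<bar> \<le> barrier_const k * Q" if "x \<in> closure \<Omega>" for x
    using w that by fastforce
  moreover have "0 \<le> Fk k h (H x) (g x)" if "x \<in> \<Omega>" for x
    using Fk[OF that] by (rule order_trans[rotated]) simp
  ultimately show ?thesis using U C2 w Fk by (intro exI[of _ U] exI[of _ w] exI[of _ g] exI[of _ H]) auto
qed

lemma mu_set_lower_bound:
  fixes \<Omega> E :: "(real^'n) set"
  assumes kn: "k \<le> CARD('n)" and k1: "1 \<le> k" and \<Omega>: "open \<Omega>" "bounded \<Omega>" and E: "compact E" "E \<subseteq> \<Omega>"
    and h: "0 \<le> h" and hR: "h * diameter \<Omega> < real k"
    and finite: "gen_hausdorff (Psi k (diameter \<Omega>)) E < \<infinity>"
  shows "if gen_hausdorff (Psi k (diameter \<Omega>)) E = 0 then mu_set k h E = \<infinity>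
    else ereal (1 / (barrier_const k * enn2real (gen_hausdorff (Psi k (diameter \<Omega>)) E))) \<le> mu_set k h E"
proof -
  obtain x where x: "0 \<le> x" "gen_hausdorff (Psi k (diameter \<Omega>)) E = ennreal x"
    using finite by (cases "gen_hausdorff (Psi k (diameter \<Omega>)) E" rule: ennreal_cases) auto
  have "ereal (1 / (barrier_const k * Q)) \<le> mu_set k h E" if "x < Q" for Q
  proof -
    have Q: "gen_hausdorff (Psi k (diameter \<Omega>)) E < ennreal Q" using x that by (simp add: ennreal_less_iff)
    obtain U w g H where "open U" "E \<subseteq> U" "closure U \<subseteq> \<Omega>" "C2_closure \<Omega> w g H"
      "\<forall>x\<in>closure \<Omega>. - (barrier_const k * Q) \<le> w x \<and> w x < 0"
      "\<forall>x\<in>\<Omega>. Fk_frame_ge k h (H x) (g x) (indicator U x)"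
      using frame_barrier_exists[OF k1 \<Omega> E h hR Q] by blast
    moreover have "barrier_const k * Q > 0" using x that barrier_const_pos by simp
    ultimately show ?thesis using mu_set_ge_if_barrier[OF kn _ \<Omega>(1)] by blast
  qed
  from ereal_ge_if_inverse_bounds[OF barrier_const_pos x(1) this]
  show ?thesis using x by simp
qed

theorem mainTheorem6:
  fixes k :: nat and s :: real
  assumes n3: "CARD('n::finite) \<ge> 3"
    and k1: "1 \<le> k" and kn: "k \<le> CARD('n) - 1"
    and s0: "0 \<le> s" and sk: "s < real k"
  shows "\<exists>C1>0. \<forall>(\<Omega>::(real^'n) set) E h.
     open \<Omega> \<and> bounded \<Omega> \<and> compact E \<and> E \<subseteq> \<Omega> \<and>
     gen_hausdorff (Psi k (diameter \<Omega>)) E < \<infinity> \<and>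
     0 \<le> h \<and> h * diameter \<Omega> = s \<longrightarrow>
       (\<forall>Q::real. ennreal Q > gen_hausdorff (Psi k (diameter \<Omega>)) E \<longrightarrow>
          (\<exists>U w g H. open U \<and> E \<subseteq> U \<and> compact (closure U) \<and> closure U \<subseteq> \<Omega> \<and>
             C2_closure \<Omega> w g H \<and> (\<forall>x\<in>closure \<Omega>. w x < 0) \<and>
             (\<forall>x\<in>\<Omega>. Fk k h (H x) (g x) \<ge> indicator U x) \<and>
             (\<forall>x\<in>closure \<Omega>. \<bar>w x\<bar> \<le> C1 * Q) \<and>
             (\<forall>x\<in>U. Fk k h (H x) (g x) + (1 / (C1 * Q)) * w x \<ge> 0) \<and>
             (\<forall>x\<in>\<Omega>. Fk k h (H x) (g x) \<ge> 0))) \<and>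
       (if gen_hausdorff (Psi k (diameter \<Omega>)) E = 0 then mu_set k h E = \<infinity>
        else mu_set k h E \<ge>
          ereal (1 / (C1 * enn2real (gen_hausdorff (Psi k (diameter \<Omega>)) E))))"
proof (intro exI[of _ "barrier_const k"] conjI allI impI)
  show "barrier_const k > 0" by (rule barrier_const_pos)
  have kn': "k \<le> CARD('n)" using kn by linarith
  fix \<Omega> E :: "(real^'n) set" and h :: real
  assume "open \<Omega> \<and> bounded \<Omega> \<and> compact E \<and> E \<subseteq> \<Omega> \<and> gen_hausdorff (Psi k (diameter \<Omega>)) E < \<infinity> \<and>
     0 \<le> h \<and> h * diameter \<Omega> = s"
  then have \<Omega>: "open \<Omega>" "bounded \<Omega>" and E: "compact E" "E \<subseteq> \<Omega>" and h: "0 \<le> h"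
    and finite: "gen_hausdorff (Psi k (diameter \<Omega>)) E < \<infinity>" and hR: "h * diameter \<Omega> < real k"
    using sk by auto
  show "if gen_hausdorff (Psi k (diameter \<Omega>)) E = 0 then mu_set k h E = \<infinity>
      else ereal (1 / (barrier_const k * enn2real (gen_hausdorff (Psi k (diameter \<Omega>)) E))) \<le> mu_set k h E"
    by (rule mu_set_lower_bound[OF kn' k1 \<Omega> E h hR finite])
  fix Q :: real assume "gen_hausdorff (Psi k (diameter \<Omega>)) E < ennreal Q"
  then show "\<exists>U w g H. open U \<and> E \<subseteq> U \<and> compact (closure U) \<and> closure U \<subseteq> \<Omega> \<and>
      C2_closure \<Omega> w g H \<and> (\<forall>x\<in>closure \<Omega>. w x < 0) \<and>
      (\<forall>x\<in>\<Omega>. indicator U x \<le> Fk k h (H x) (g x)) \<and>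
      (\<forall>x\<in>closure \<Omega>. \<bar>w x\<bar> \<le> barrier_const k * Q) \<and>
      (\<forall>x\<in>U. 0 \<le> Fk k h (H x) (g x) + 1 / (barrier_const k * Q) * w x) \<and>
      (\<forall>x\<in>\<Omega>. 0 \<le> Fk k h (H x) (g x))"
    by (rule Fk_barrier_exists[OF kn' k1 \<Omega> E h hR])
qed

end
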